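(* Let $\nu\in\mathcal{S}^1$ and let $(u_\varepsilon)$, $u_\varepsilon\in\mathcal{SF}_\varepsilon$, be a sequence (indexed by $\varepsilon\to0$) such that $\chi(u_\varepsilon)\to\chi_\nu$ in $L^1(Q^\nu)$ and $F_\varepsilon(u_\varepsilon,Q^\nu)\to\psi(1,1,\nu)$. Then for every $\delta>0$ there exist a sequence $\sigma_\varepsilon\to0$ (depending on $\delta$) and strips $S_\varepsilon=S_{\varepsilon,r_\varepsilon}\in\mathscr{S}^\nu_{\varepsilon,\delta}$ such that $$F_\varepsilon(u_\varepsilon,S_\varepsilon)+\|\chi(u_\varepsilon)-\chi_\nu\|_{L^1(S_\varepsilon)}\le\varepsilon\sigma_\varepsilon .$$
   Context: Lattice: $\hat e_1=(1,0)$, $\hat e_2=\tfrac12(1,\sqrt3)$, $\hat e_3=\tfrac12(-1,\sqrt3)$, $\mathcal{L}=\{z_1\hat e_1+z_2\hat e_2\colon z\in\mathbb{Z}^2\}$, $\mathcal{L}^1=\{z_1(\hat e_1+\hat e_2)+z_2(\hat e_2+\hat e_3)\colon z\in\mathbb{Z}^2\}$, $\mathcal{L}^2=\mathcal{L}^1+\hat e_1$, $\mathcal{L}^3=\mathcal{L}^1+\hat e_2$. $\mathcal{T}(\mathbb{R}^2)$: closed triangles $\mathrm{conv}\{i,j,k\}$, $i,j,k\in\mathcal L$ pairwise at distance 1, labelled $i\in\mathcal{L}^1,j\in\mathcal{L}^2,k\in\mathcal{L}^3$. For $\varepsilon>0$: $\mathcal{L}_\varepsilon=\varepsilon\mathcal{L}$,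 $\mathcal{T}_\varepsilon(\mathbb{R}^2)=\varepsilon\mathcal{T}(\mathbb{R}^2)$, $\mathcal{T}_\varepsilon(A)=\{T\in\mathcal{T}_\varepsilon(\mathbb{R}^2)\colon T\subset A\}$, $\mathcal{SF}_\varepsilon=\{u\colon\mathcal{L}_\varepsilon\to\mathcal{S}^1\}$. $F_\varepsilon(u,T)=\varepsilon|u(\varepsilon i)+u(\varepsilon j)+u(\varepsilon k)|^2$, $F_\varepsilon(u,A)=\sum_{T\in\mathcal{T}_\varepsilon(A)}F_\varepsilon(u,T)$. With $v\times w=v_1w_2-v_2w_1$, $\chi(u,T)=\frac{2}{3\sqrt3}\big(u(\varepsilon i)\times u(\varepsilon j)+u(\varepsilon j)\times u(\varepsilon k)+u(\varepsilon k)\times u(\varepsilon i)\big)$ and $\chi(u)$ equals $\chi(u,T)$ on the interior of each $T$. For $\nu\in\mathcal S^1$: $\nu^\perp=(-\nu_2,\nu_1)$, $R^\nu_{\ell,h}=\{x\colon|\langle x,\nu^\perp\rangle|<\ell/2,\ |\langle x,\nu\rangle|<h/2\}$, $Q^\nu_\rho=R^\nu_{\rho,\rho}$, $Q^\nu=Q^\nu_1$, $\chi_\nu(x)=1$ if $\langle x,\nu\rangle\ge0$ and $-1$ otherwise, and $\psi(\ell,h,\nu)=\frac1\ell\inf\{\liminf_{\varepsilon\to0}F_\varepsilon(u_\varepsilon,R^\nu_{\ell,h})\colon \chi(u_\varepsilon)\to\chi_\nu\text{ in }L^1(R^\nu_{\ell,h})\}$, the infimum over all sequences $\varepsilon\to0$,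 $u_\varepsilon\in\mathcal{SF}_\varepsilon$. For $\delta>0$ and $\varepsilon>0$ the class of strips is $\mathscr{S}^\nu_{\varepsilon,\delta}=\{S_{\varepsilon,r}:=Q^\nu_{r+12\varepsilon}\setminus(\overline{Q^\nu_r}\cup\overline{R^\nu_{1,\delta}})\colon r\in(1-3\delta,1-2\delta)\}$. *)

theory Defs
  imports "HOL-Analysis.Analysis"
begin

type_synonym pt = "real \<times> real"

definition e1 :: pt where "e1 = (1, 0)"
definition e2 :: pt where "e2 = (1/2, sqrt 3 / 2)"
definition e3 :: pt where "e3 = (-1/2, sqrt 3 / 2)"

definition Lat :: "pt set" where
  "Lat = {of_int a *\<^sub>R e1 + of_int b *\<^sub>R e2 | a b :: int. True}"
definition Lat1 :: "pt set" where
  "Lat1 = {of_int a *\<^sub>R (e1 + e2) + of_int b *\<^sub>R (e2 + e3) | a b :: int. True}"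
definition Lat2 :: "pt set" where "Lat2 = (\<lambda>x. x + e1) ` Lat1"
definition Lat3 :: "pt set" where "Lat3 = (\<lambda>x. x + e2) ` Lat1"

definition Tri :: "(pt \<times> pt \<times> pt) set" where
  "Tri = {(i, j, k). i \<in> Lat1 \<and> j \<in> Lat2 \<and> k \<in> Lat3 \<and>
                    dist i j = 1 \<and> dist j k = 1 \<and> dist k i = 1}"

definition tri_set :: "real \<Rightarrow> pt \<times> pt \<times> pt \<Rightarrow> pt set" where
  "tri_set \<epsilon> t = (case t of (i, j, k) \<Rightarrow> convex hull {\<epsilon> *\<^sub>R i, \<epsilon> *\<^sub>R j, \<epsilon> *\<^sub>R k})"

text \<open>Triangles of T_eps(A), indexed by their (unscaled) labelled vertex triples.\<close>
definition TriIn :: "real \<Rightarrow> pt set \<Rightarrow> (pt \<times> pt \<times> pt) set" where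
  "TriIn \<epsilon> A = {t \<in> Tri. tri_set \<epsilon> t \<subseteq> A}"

definition SF :: "real \<Rightarrow> (pt \<Rightarrow> pt) set" where
  "SF \<epsilon> = {u. \<forall>x \<in> Lat. u (\<epsilon> *\<^sub>R x) \<in> sphere 0 1}"

definition Ftri :: "real \<Rightarrow> (pt \<Rightarrow> pt) \<Rightarrow> pt \<times> pt \<times> pt \<Rightarrow> real" where
  "Ftri \<epsilon> u t = (case t of (i, j, k) \<Rightarrow>
     \<epsilon> * (norm (u (\<epsilon> *\<^sub>R i) + u (\<epsilon> *\<^sub>R j) + u (\<epsilon> *\<^sub>R k)))\<^sup>2)"

definition Fen :: "real \<Rightarrow> (pt \<Rightarrow> pt) \<Rightarrow> pt set \<Rightarrow> real" where
  "Fen \<epsilon> u A = (\<Sum>t \<in> TriIn \<epsilon> A. Ftri \<epsilon> u t)"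

definition cross2 :: "pt \<Rightarrow> pt \<Rightarrow> real" where
  "cross2 v w = fst v * snd w - snd v * fst w"

definition chiT :: "real \<Rightarrow> (pt \<Rightarrow> pt) \<Rightarrow> pt \<times> pt \<times> pt \<Rightarrow> real" where
  "chiT \<epsilon> u t = (case t of (i, j, k) \<Rightarrow>
     2 / (3 * sqrt 3) * (cross2 (u (\<epsilon> *\<^sub>R i)) (u (\<epsilon> *\<^sub>R j))
                        + cross2 (u (\<epsilon> *\<^sub>R j)) (u (\<epsilon> *\<^sub>R k))
                        + cross2 (u (\<epsilon> *\<^sub>R k)) (u (\<epsilon> *\<^sub>R i))))"

text \<open>Chirality field: chi(u,T) on the interior of each triangle T; on the (null) set of
  triangle edges we set it to 0.\<close>
definition chi :: "real \<Rightarrow> (pt \<Rightarrow> pt) \<Rightarrow> pt \<Rightarrow> real" where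
  "chi \<epsilon> u x = (if \<exists>t \<in> Tri. x \<in> interior (tri_set \<epsilon> t)
                 then chiT \<epsilon> u (SOME t. t \<in> Tri \<and> x \<in> interior (tri_set \<epsilon> t)) else 0)"

definition perp :: "pt \<Rightarrow> pt" where "perp \<nu> = (- snd \<nu>, fst \<nu>)"

definition Rect :: "pt \<Rightarrow> real \<Rightarrow> real \<Rightarrow> pt set" where
  "Rect \<nu> l h = {x. \<bar>inner x (perp \<nu>)\<bar> < l / 2 \<and> \<bar>inner x \<nu>\<bar> < h / 2}"

definition Sq :: "pt \<Rightarrow> real \<Rightarrow> pt set" where "Sq \<nu> \<rho> = Rect \<nu> \<rho> \<rho>"

definition chinu :: "pt \<Rightarrow> pt \<Rightarrow> real" where
  "chinu \<nu> x = (if inner x \<nu> \<ge> 0 then 1 else -1)"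

definition L1dist :: "pt set \<Rightarrow> (pt \<Rightarrow> real) \<Rightarrow> (pt \<Rightarrow> real) \<Rightarrow> real" where
  "L1dist A f g = (LINT x:A|lborel. \<bar>f x - g x\<bar>)"

definition psi :: "real \<Rightarrow> real \<Rightarrow> pt \<Rightarrow> ereal" where
  "psi l h \<nu> = Inf {liminf (\<lambda>n. ereal (Fen (eps n) (u n) (Rect \<nu> l h))) | eps u.
        (\<forall>n. eps n > 0) \<and> eps \<longlonglongrightarrow> 0 \<and> (\<forall>n. u n \<in> SF (eps n)) \<and>
        (\<lambda>n. L1dist (Rect \<nu> l h) (chi (eps n) (u n)) (chinu \<nu>)) \<longlonglongrightarrow> 0} / ereal l"

definition strip :: "pt \<Rightarrow> real \<Rightarrow> real \<Rightarrow> real \<Rightarrow> pt set" where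
  "strip \<nu> \<delta> \<epsilon> r = Sq \<nu> (r + 12 * \<epsilon>) - (closure (Sq \<nu> r) \<union> closure (Rect \<nu> 1 \<delta>))"

end

(* The energy of u_eps in Q^nu outside the central band R^nu_{1,delta} tends to zero.  Indeed,
   translating by lattice vectors and rescaling by a factor s maps the problem at scale eps to the
   problem at scale eps/s, so N ~ 1/delta disjoint copies of Q^nu of side (1 - theta)/N placed
   along the band are admissible for psi(1,1,nu), and each of them eventually carries energy at
   least its share (1 - theta)/N of psi(1,1,nu), up to o(1).  Since all of Q^nu carries
   psi(1,1,nu) + o(1), at most about theta psi(1,1,nu) is left outside the band.  This needs
   psi(1,1,nu) < infinity, which follows from an explicit competitor: the 120-degree ground
   state with opposite chiralities on the two sides of the interface.
   Finally, about delta/(12 eps) disjoint strips S_{eps,r} fit outside the band; the cheapest of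
   them carries at most the average, i.e. O(eps/delta) times the vanishing energy outside the
   band plus L^1 error. *)

theory Submission
  imports Defs
begin

section \<open>The triangular lattice\<close>

(* lat_pt m n = m e1 + n e2, and dual1, dual2 form the dual basis of e1, e2. *)
definition lat_pt :: "int \<Rightarrow> int \<Rightarrow> pt" where
  "lat_pt m n = (real_of_int m + real_of_int n / 2, real_of_int n * sqrt 3 / 2)"

definition dual1 :: pt where "dual1 = (1, - 1 / sqrt 3)"
definition dual2 :: pt where "dual2 = (0, 2 / sqrt 3)"

lemma inner_dual1_lat_pt [simp]: "inner dual1 (lat_pt m n) = m"
  by (simp add: dual1_def lat_pt_def inner_prod_def field_simps)
lemma inner_dual2_lat_pt [simp]: "inner dual2 (lat_pt m n) = n"
  by (simp add: dual2_def lat_pt_def inner_prod_def field_simps)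

lemma lat_pt_coords: "y = (inner dual1 y + inner dual2 y / 2, inner dual2 y * sqrt 3 / 2)"
  by (cases y) (simp add: dual1_def dual2_def inner_prod_def field_simps)

lemma lat_pt_eq_iff [simp]: "lat_pt m n = lat_pt m' n' \<longleftrightarrow> m = m' \<and> n = n'"
  by (metis inner_dual1_lat_pt inner_dual2_lat_pt of_int_eq_iff)

lemma lat_pt_add: "lat_pt m n + lat_pt m' n' = lat_pt (m + m') (n + n')"
  by (simp add: lat_pt_def field_simps)
lemma lat_pt_diff: "lat_pt m n - lat_pt m' n' = lat_pt (m - m') (n - n')"
  by (simp add: lat_pt_def field_simps)
lemma norm_lat_pt_sq: "(norm (lat_pt a b))\<^sup>2 = real_of_int (a*a + a*b + b*b)"
proof -
  have "(norm (lat_pt a b))\<^sup>2 = (a + b/2)^2 + (b * sqrt 3 / 2)^2"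
    by (simp add: lat_pt_def norm_Pair power2_eq_square)
  also have "\<dots> = a*a + a*b + b*b" by (simp add: power2_eq_square field_simps)
  finally show ?thesis by simp
qed

definition unit_steps :: "(int \<times> int) set" where
  "unit_steps = {(1,0),(-1,0),(0,1),(0,-1),(1,-1),(-1,1)}"

lemma uminus_unit_steps: "(- a, - b) \<in> unit_steps \<longleftrightarrow> (a, b) \<in> unit_steps"
  by (auto simp: unit_steps_def)

lemma eisenstein_norm_eq_1: fixes a b :: int assumes "a*a + a*b + b*b = 1"
  shows "(a,b) \<in> unit_steps"
proof -
  have h1: "(2*a+b)*(2*a+b) + 3*(b*b) = 4" using assms by algebra
  have h2: "(2*b+a)*(2*b+a) + 3*(a*a) = 4" using assms by algebra
  have sq1: "\<bar>c\<bar> \<le> 1" if "c*c \<le> 1" for c :: int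
    using that by (smt (verit) abs_zmult_eq_1 mult_le_0_iff)
  have "b*b \<le> 1" using h1 zero_le_square[of "2*a+b"] by linarith
  hence "\<bar>b\<bar> \<le> 1" by (rule sq1)
  moreover have "a*a \<le> 1" using h2 zero_le_square[of "2*b+a"] by linarith
  hence "\<bar>a\<bar> \<le> 1" by (rule sq1)
  ultimately have "a \<in> {-1,0,1}" "b \<in> {-1,0,1}" by auto
  then show ?thesis using assms by (auto simp: unit_steps_def)
qed

lemma dist_lat_pt_eq_1_iff: "dist (lat_pt m n) (lat_pt m' n') = 1 \<longleftrightarrow> (m - m', n - n') \<in> unit_steps"
proof -
  have "dist (lat_pt m n) (lat_pt m' n') = 1 \<longleftrightarrow> (norm (lat_pt (m-m') (n-n')))\<^sup>2 = 1"
    using norm_ge_zero[of "lat_pt (m-m') (n-n')"] by (auto simp add: dist_norm lat_pt_diff power2_eq_1_iff simp del: norm_ge_zero)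
  also have "\<dots> \<longleftrightarrow> (m-m')*(m-m') + (m-m')*(n-n') + (n-n')*(n-n') = 1"
    unfolding norm_lat_pt_sq by (metis of_int_1 of_int_eq_iff)
  also have "\<dots> \<longleftrightarrow> (m - m', n - n') \<in> unit_steps"
  proof
    assume "(m-m')*(m-m') + (m-m')*(n-n') + (n-n')*(n-n') = 1"
    from eisenstein_norm_eq_1[OF this] show "(m - m', n - n') \<in> unit_steps" .
  next
    assume "(m - m', n - n') \<in> unit_steps"
    then show "(m-m')*(m-m') + (m-m')*(n-n') + (n-n')*(n-n') = 1" by (auto simp: unit_steps_def)
  qed
  finally show ?thesis .
qed

lemma Lat1_eq: "Lat1 = {lat_pt m n | m n. m mod 3 = n mod 3}"
proof -
  have e: "of_int a *\<^sub>R (e1 + e2) + of_int b *\<^sub>R (e2 + e3) = lat_pt (a - b) (a + 2*b)" for a b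
    by (simp add: e1_def e2_def e3_def lat_pt_def field_simps)
  show ?thesis
  proof (rule set_eqI, rule iffI)
    fix x assume "x \<in> Lat1"
    then obtain a b where x: "x = lat_pt (a - b) (a + 2*b)" unfolding Lat1_def e by blast
    have "(a - b) mod 3 = (a + 2*b) mod 3" by presburger
    then show "x \<in> {lat_pt m n | m n. m mod 3 = n mod 3}" using x by blast
  next
    fix x assume "x \<in> {lat_pt m n | m n. m mod 3 = n mod 3}"
    then obtain m n where x: "x = lat_pt m n" and "m mod 3 = n mod 3" by blast
    then obtain b where b: "n - m = 3 * b" by (metis mod_eq_dvd_iff dvd_def)
    have "lat_pt m n = lat_pt ((m + b) - b) ((m+b) + 2 * b)" using b by simp
    then show "x \<in> Lat1" unfolding Lat1_def e x by blast
  qed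
qed

lemma Lat2_eq: "Lat2 = {lat_pt m n | m n. (m - n) mod 3 = 1}"
proof -
  have e1l: "e1 = lat_pt 1 0" by (simp add: e1_def lat_pt_def)
  show ?thesis unfolding Lat2_def Lat1_eq e1l
  proof (auto simp: lat_pt_add)
    fix m n :: int assume "m mod 3 = n mod 3" then show "(m + 1 - n) mod 3 = 1" by presburger
  next
    fix m n :: int assume "(m - n) mod 3 = 1"
    then show "lat_pt m n \<in> (\<lambda>x. x + lat_pt 1 0) ` {lat_pt m n |m n. m mod 3 = n mod 3}"
      by (intro image_eqI[of _ _ "lat_pt (m - 1) n"]) (auto simp: lat_pt_add, presburger)
  qed
qed

lemma Lat3_eq: "Lat3 = {lat_pt m n | m n. (m - n) mod 3 = 2}"
proof -
  have e2l: "e2 = lat_pt 0 1" by (simp add: e2_def lat_pt_def)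
  show ?thesis unfolding Lat3_def Lat1_eq e2l
  proof (auto simp: lat_pt_add)
    fix m n :: int assume "m mod 3 = n mod 3" then show "(m - (n+1)) mod 3 = 2" by presburger
  next
    fix m n :: int assume "(m - n) mod 3 = 2"
    then show "lat_pt m n \<in> (\<lambda>x. x + lat_pt 0 1) ` {lat_pt m n |m n. m mod 3 = n mod 3}"
      by (intro image_eqI[of _ _ "lat_pt m (n - 1)"]) (auto simp: lat_pt_add, presburger)
  qed
qed

(* The upward (b) or downward (\<not> b) triangle of the rhombus with corner lat_pt p q, with its
   vertices listed in the order Lat1, Lat2, Lat3. *)
definition tri_at :: "int \<Rightarrow> int \<Rightarrow> bool \<Rightarrow> pt \<times> pt \<times> pt" where
  "tri_at p q b = (let d = (p - q) mod 3 in
     if b then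
       (if d = 0 then (lat_pt p q, lat_pt (p+1) q, lat_pt p (q+1))
        else if d = 1 then (lat_pt p (q+1), lat_pt p q, lat_pt (p+1) q)
        else (lat_pt (p+1) q, lat_pt p (q+1), lat_pt p q))
     else
       (if d = 0 then (lat_pt (p+1) (q+1), lat_pt (p+1) q, lat_pt p (q+1))
        else if d = 1 then (lat_pt p (q+1), lat_pt (p+1) (q+1), lat_pt (p+1) q)
        else (lat_pt (p+1) q, lat_pt p (q+1), lat_pt (p+1) (q+1))))"

definition tri_at_verts :: "int \<Rightarrow> int \<Rightarrow> bool \<Rightarrow> pt set" where
  "tri_at_verts p q b = (if b then {lat_pt p q, lat_pt (p+1) q, lat_pt p (q+1)} else {lat_pt (p+1) q, lat_pt p (q+1), lat_pt (p+1) (q+1)})"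

lemma mod3_cases: fixes d :: int obtains "d mod 3 = 0" | "d mod 3 = 1" | "d mod 3 = 2"
proof -
  have "d mod 3 = 0 \<or> d mod 3 = 1 \<or> d mod 3 = 2" by presburger
  then show thesis using that by metis
qed

lemma tri_at_verts_eq: "(case tri_at p q b of (i, j, k) \<Rightarrow> {i, j, k}) = tri_at_verts p q b"
  by (rule mod3_cases[of "p - q"]) (auto simp: tri_at_def tri_at_verts_def Let_def)

lemma tri_set_tri_at: "tri_set \<epsilon> (tri_at p q b) = convex hull ((\<lambda>v. \<epsilon> *\<^sub>R v) ` tri_at_verts p q b)"
proof -
  obtain i j k where t: "tri_at p q b = (i, j, k)" by (metis prod_cases3)
  have "tri_at_verts p q b = {i,j,k}" using tri_at_verts_eq[of p q b] t by simp
  then show ?thesis by (simp add: tri_set_def t)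
qed

lemma tri_at_Tri: "tri_at p q b \<in> Tri"
  by (rule mod3_cases[of "p - q"];
      auto simp: tri_at_def Let_def Tri_def Lat1_eq Lat2_eq Lat3_eq dist_lat_pt_eq_1_iff unit_steps_def;
      presburger)

lemma adjacent_unit_steps:
  fixes a1 b1 a2 b2 :: int
  assumes "(a1, b1) \<in> unit_steps" "(a2, b2) \<in> unit_steps" "(a2 - a1, b2 - b1) \<in> unit_steps"
    and "(a1 - b1) mod 3 = 1" "(a2 - b2) mod 3 = 2"
  shows "(a1, b1, a2, b2) \<in> {(1,0,0,1), (1,0,1,-1), (0,-1,1,-1), (0,-1,-1,0), (-1,1,-1,0), (-1,1,0,1)}"
  using assms unfolding unit_steps_def by (elim insertE emptyE) simp_all

lemma Tri_vertex_offsets: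
  assumes "(lat_pt m n, lat_pt m' n', lat_pt m'' n'') \<in> Tri"
  shows "(m' - m, n' - n, m'' - m, n'' - n)
    \<in> {(1,0,0,1), (1,0,1,-1), (0,-1,1,-1), (0,-1,-1,0), (-1,1,-1,0), (-1,1,0,1)}"
proof (rule adjacent_unit_steps)
  have c: "m mod 3 = n mod 3" "(m' - n') mod 3 = 1" "(m'' - n'') mod 3 = 2"
    and d: "(m - m', n - n') \<in> unit_steps" "(m' - m'', n' - n'') \<in> unit_steps"
      "(m'' - m, n'' - n) \<in> unit_steps"
    using assms by (auto simp: Tri_def Lat1_eq Lat2_eq Lat3_eq dist_lat_pt_eq_1_iff)
  show "(m' - m, n' - n) \<in> unit_steps" using d(1) uminus_unit_steps[of "m - m'" "n - n'"] by simp
  show "(m'' - m, n'' - n) \<in> unit_steps" by (rule d(3))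
  show "(m'' - m - (m' - m), n'' - n - (n' - n)) \<in> unit_steps"
    using d(2) uminus_unit_steps[of "m' - m''" "n' - n''"] by simp
  show "(m' - m - (n' - n)) mod 3 = 1" "(m'' - m - (n'' - n)) mod 3 = 2" using c by presburger+
qed

lemma Tri_obtains_tri_at: assumes "t \<in> Tri" shows "\<exists>p q b. t = tri_at p q b"
proof -
  from assms obtain m n m' n' m'' n'' where t: "t = (lat_pt m n, lat_pt m' n', lat_pt m'' n'')"
    and c: "m mod 3 = n mod 3"
    unfolding Tri_def Lat1_eq Lat2_eq Lat3_eq by blast
  have c': "(m - n) mod 3 = 0" "(m - (n - 1)) mod 3 = 1" "(m - 1 - (n - 1)) mod 3 = 0"
    "(m - 1 - n) mod 3 = 2" using c by presburger+
  define off where "off = (m' - m, n' - n, m'' - m, n'' - n)"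
  have eqs: "m' = m + fst off" "n' = n + fst (snd off)" "m'' = m + fst (snd (snd off))"
    "n'' = n + snd (snd (snd off))" by (simp_all add: off_def)
  have "off \<in> {(1,0,0,1), (1,0,1,-1), (0,-1,1,-1), (0,-1,-1,0), (-1,1,-1,0), (-1,1,0,1)}"
    unfolding off_def using Tri_vertex_offsets assms t by blast
  then consider "off = (1,0,0,1)" | "off = (1,0,1,-1)" | "off = (0,-1,1,-1)" | "off = (0,-1,-1,0)"
    | "off = (-1,1,-1,0)" | "off = (-1,1,0,1)" by blast
  then show ?thesis
  proof cases
    case 1 then have "t = tri_at m n True" using c' by (simp add: t eqs tri_at_def)
    then show ?thesis by blast
  next
    case 2 then have "t = tri_at m (n - 1) False" using c' by (simp add: t eqs tri_at_def)
    then show ?thesis by blast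
  next
    case 3 then have "t = tri_at m (n - 1) True" using c' by (simp add: t eqs tri_at_def)
    then show ?thesis by blast
  next
    case 4 then have "t = tri_at (m - 1) (n - 1) False" using c' by (simp add: t eqs tri_at_def)
    then show ?thesis by blast
  next
    case 5 then have "t = tri_at (m - 1) n True" using c' by (simp add: t eqs tri_at_def)
    then show ?thesis by blast
  next
    case 6 then have "t = tri_at (m - 1) n False" using c' by (simp add: t eqs tri_at_def)
    then show ?thesis by blast
  qed
qed

lemma Tri_iff_tri_at: "t \<in> Tri \<longleftrightarrow> (\<exists>p q b. t = tri_at p q b)"
  using Tri_obtains_tri_at tri_at_Tri by blast

definition up_cell :: "real \<Rightarrow> int \<Rightarrow> int \<Rightarrow> pt set" where
  "up_cell \<epsilon> p q = {y. inner dual1 y > \<epsilon> * p} \<inter> {y. inner dual2 y > \<epsilon> * q} \<inter> {y. inner (dual1 + dual2) y < \<epsilon> * (p + q + 1)}"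
definition down_cell :: "real \<Rightarrow> int \<Rightarrow> int \<Rightarrow> pt set" where
  "down_cell \<epsilon> p q = {y. inner dual1 y < \<epsilon> * (p + 1)} \<inter> {y. inner dual2 y < \<epsilon> * (q + 1)} \<inter> {y. inner (dual1 + dual2) y > \<epsilon> * (p + q + 1)}"

lemma dual1_nonzero: "dual1 \<noteq> 0" by (simp add: dual1_def zero_prod_def)
lemma dual2_nonzero: "dual2 \<noteq> 0" by (simp add: dual2_def zero_prod_def)
lemma dual12_nonzero: "dual1 + dual2 \<noteq> 0" by (simp add: dual1_def dual2_def zero_prod_def)

lemma tri_up_subset_halfplanes: assumes e: "\<epsilon> \<ge> 0" shows "convex hull ((\<lambda>v. \<epsilon> *\<^sub>R v) ` tri_at_verts p q True) \<subseteq>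
   {y. inner dual1 y \<ge> \<epsilon> * p} \<inter> {y. inner dual2 y \<ge> \<epsilon> * q} \<inter> {y. inner (dual1 + dual2) y \<le> \<epsilon> * (p + q + 1)}"
proof (rule hull_minimal)
  show "convex ({y. inner dual1 y \<ge> \<epsilon> * p} \<inter> {y. inner dual2 y \<ge> \<epsilon> * q} \<inter> {y. inner (dual1 + dual2) y \<le> \<epsilon> * (p + q + 1)})"
    by (intro convex_Int convex_halfspace_le convex_halfspace_ge)
qed (use e in \<open>auto simp: tri_at_verts_def inner_add_left algebra_simps\<close>)

lemma tri_down_subset_halfplanes: assumes e: "\<epsilon> \<ge> 0" shows "convex hull ((\<lambda>v. \<epsilon> *\<^sub>R v) ` tri_at_verts p q False) \<subseteq>
   {y. inner dual1 y \<le> \<epsilon> * (p + 1)} \<inter> {y. inner dual2 y \<le> \<epsilon> * (q + 1)} \<inter> {y. inner (dual1 + dual2) y \<ge> \<epsilon> * (p + q + 1)}"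
proof (rule hull_minimal)
  show "convex ({y. inner dual1 y \<le> \<epsilon> * (p + 1)} \<inter> {y. inner dual2 y \<le> \<epsilon> * (q + 1)} \<inter> {y. inner (dual1 + dual2) y \<ge> \<epsilon> * (p + q + 1)})"
    by (intro convex_Int convex_halfspace_le convex_halfspace_ge)
qed (use e in \<open>auto simp: tri_at_verts_def inner_add_left algebra_simps\<close>)

lemma interior_tri_up_subset: assumes e: "\<epsilon> \<ge> 0" shows "interior (tri_set \<epsilon> (tri_at p q True)) \<subseteq> up_cell \<epsilon> p q"
proof -
  have "interior (tri_set \<epsilon> (tri_at p q True)) \<subseteq> interior ({y. inner dual1 y \<ge> \<epsilon> * p} \<inter> {y. inner dual2 y \<ge> \<epsilon> * q} \<inter> {y. inner (dual1 + dual2) y \<le> \<epsilon> * (p + q + 1)})"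
    unfolding tri_set_tri_at by (rule interior_mono[OF tri_up_subset_halfplanes[OF e]])
  also have "\<dots> = up_cell \<epsilon> p q"
    unfolding interior_Int up_cell_def using dual1_nonzero dual2_nonzero dual12_nonzero by simp
  finally show ?thesis .
qed

lemma interior_tri_down_subset: assumes e: "\<epsilon> \<ge> 0" shows "interior (tri_set \<epsilon> (tri_at p q False)) \<subseteq> down_cell \<epsilon> p q"
proof -
  have "interior (tri_set \<epsilon> (tri_at p q False)) \<subseteq> interior ({y. inner dual1 y \<le> \<epsilon> * (p + 1)} \<inter> {y. inner dual2 y \<le> \<epsilon> * (q + 1)} \<inter> {y. inner (dual1 + dual2) y \<ge> \<epsilon> * (p + q + 1)})"
    unfolding tri_set_tri_at by (rule interior_mono[OF tri_down_subset_halfplanes[OF e]])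
  also have "\<dots> = down_cell \<epsilon> p q"
    unfolding interior_Int down_cell_def using dual1_nonzero dual2_nonzero dual12_nonzero by simp
  finally show ?thesis .
qed

lemma open_up_cell: "open (up_cell \<epsilon> p q)"
  unfolding up_cell_def by (intro open_Int open_halfspace_lt open_halfspace_gt)
lemma open_down_cell: "open (down_cell \<epsilon> p q)"
  unfolding down_cell_def by (intro open_Int open_halfspace_lt open_halfspace_gt)

lemma pt_lat_coords: obtains a b where "y = (a + b/2, b * sqrt 3 / 2)" "inner dual1 y = a" "inner dual2 y = b"
  using lat_pt_coords[of y] by metis

lemma convex_comb_lat_pts: "u *\<^sub>R (\<epsilon> *\<^sub>R lat_pt m n) + v *\<^sub>R (\<epsilon> *\<^sub>R lat_pt m' n') + w *\<^sub>R (\<epsilon> *\<^sub>R lat_pt m'' n'') =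
  (\<epsilon> * (u * m + v * m' + w * m'') + \<epsilon> * (u * n + v * n' + w * n'') / 2, \<epsilon> * (u * n + v * n' + w * n'') * sqrt 3 / 2)"
  by (simp add: lat_pt_def) (simp add: field_simps)

lemma up_cell_subset_tri: assumes e: "\<epsilon> > 0" shows "up_cell \<epsilon> p q \<subseteq> tri_set \<epsilon> (tri_at p q True)"
proof
  fix y assume y: "y \<in> up_cell \<epsilon> p q"
  obtain a b where yab: "y = (a + b/2, b * sqrt 3 / 2)" "inner dual1 y = a" "inner dual2 y = b"
    by (rule pt_lat_coords)
  define \<alpha> where "\<alpha> = a / \<epsilon> - p"
  define \<beta> where "\<beta> = b / \<epsilon> - q"
  have a: "a = \<epsilon> * (p + \<alpha>)" and b: "b = \<epsilon> * (q + \<beta>)" using e by (simp_all add: \<alpha>_def \<beta>_def)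
  have h: "\<epsilon> * p < \<epsilon> * (p + \<alpha>)" "\<epsilon> * q < \<epsilon> * (q + \<beta>)" "\<epsilon> * (p + \<alpha>) + \<epsilon> * (q + \<beta>) < \<epsilon> * (p + q + 1)"
    using y yab unfolding a b by (auto simp: up_cell_def inner_add_left)
  have h': "\<epsilon> * 0 < \<epsilon> * \<alpha>" "\<epsilon> * 0 < \<epsilon> * \<beta>" "\<epsilon> * (\<alpha> + \<beta>) < \<epsilon> * 1"
    using h by (simp_all add: algebra_simps)
  have pos: "\<alpha> \<ge> 0" "\<beta> \<ge> 0" "1 - \<alpha> - \<beta> \<ge> 0"
    using h'[unfolded mult_less_cancel_left_pos[OF e]] by simp_all
  have eq: "y = (1 - \<alpha> - \<beta>) *\<^sub>R (\<epsilon> *\<^sub>R lat_pt p q) + \<alpha> *\<^sub>R (\<epsilon> *\<^sub>R lat_pt (p+1) q) + \<beta> *\<^sub>R (\<epsilon> *\<^sub>R lat_pt p (q+1))"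
    unfolding convex_comb_lat_pts yab(1) a b by (simp add: algebra_simps)
  have im: "(\<lambda>v. \<epsilon> *\<^sub>R v) ` tri_at_verts p q True = {\<epsilon> *\<^sub>R lat_pt p q, \<epsilon> *\<^sub>R lat_pt (p+1) q, \<epsilon> *\<^sub>R lat_pt p (q+1)}" by (simp add: tri_at_verts_def)
  show "y \<in> tri_set \<epsilon> (tri_at p q True)"
    unfolding tri_set_tri_at im convex_hull_3 mem_Collect_eq
    by (rule exI[of _ "1 - \<alpha> - \<beta>"], rule exI[of _ "\<alpha>"], rule exI[of _ "\<beta>"]) (use pos eq in simp)
qed

lemma down_cell_subset_tri: assumes e: "\<epsilon> > 0" shows "down_cell \<epsilon> p q \<subseteq> tri_set \<epsilon> (tri_at p q False)"
proof
  fix y assume y: "y \<in> down_cell \<epsilon> p q"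
  obtain a b where yab: "y = (a + b/2, b * sqrt 3 / 2)" "inner dual1 y = a" "inner dual2 y = b"
    by (rule pt_lat_coords)
  define \<alpha> where "\<alpha> = p + 1 - a / \<epsilon>"
  define \<beta> where "\<beta> = q + 1 - b / \<epsilon>"
  have a: "a = \<epsilon> * (p + 1 - \<alpha>)" and b: "b = \<epsilon> * (q + 1 - \<beta>)" using e by (simp_all add: \<alpha>_def \<beta>_def)
  have h: "\<epsilon> * (p + 1 - \<alpha>) < \<epsilon> * (p + 1)" "\<epsilon> * (q + 1 - \<beta>) < \<epsilon> * (q + 1)"
     "\<epsilon> * (p + 1 - \<alpha>) + \<epsilon> * (q + 1 - \<beta>) > \<epsilon> * (p + q + 1)"
    using y yab unfolding a b by (auto simp: down_cell_def inner_add_left)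
  have h': "\<epsilon> * 0 < \<epsilon> * \<alpha>" "\<epsilon> * 0 < \<epsilon> * \<beta>" "\<epsilon> * (\<alpha> + \<beta>) < \<epsilon> * 1"
    using h by (simp_all add: algebra_simps)
  have pos: "\<beta> \<ge> 0" "\<alpha> \<ge> 0" "1 - \<alpha> - \<beta> \<ge> 0"
    using h'[unfolded mult_less_cancel_left_pos[OF e]] by simp_all
  have eq: "y = \<beta> *\<^sub>R (\<epsilon> *\<^sub>R lat_pt (p+1) q) + \<alpha> *\<^sub>R (\<epsilon> *\<^sub>R lat_pt p (q+1)) + (1 - \<alpha> - \<beta>) *\<^sub>R (\<epsilon> *\<^sub>R lat_pt (p+1) (q+1))"
    unfolding convex_comb_lat_pts yab(1) a b by (simp add: algebra_simps)
  have im: "(\<lambda>v. \<epsilon> *\<^sub>R v) ` tri_at_verts p q False = {\<epsilon> *\<^sub>R lat_pt (p+1) q, \<epsilon> *\<^sub>R lat_pt p (q+1), \<epsilon> *\<^sub>R lat_pt (p+1) (q+1)}" by (simp add: tri_at_verts_def)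
  show "y \<in> tri_set \<epsilon> (tri_at p q False)"
    unfolding tri_set_tri_at im convex_hull_3 mem_Collect_eq
    by (rule exI[of _ "\<beta>"], rule exI[of _ "\<alpha>"], rule exI[of _ "1 - \<alpha> - \<beta>"]) (use pos eq in simp)
qed

lemma interior_tri_up: "\<epsilon> > 0 \<Longrightarrow> interior (tri_set \<epsilon> (tri_at p q True)) = up_cell \<epsilon> p q"
  using interior_tri_up_subset[of \<epsilon>] interior_maximal[OF up_cell_subset_tri open_up_cell] by fastforce
lemma interior_tri_down: "\<epsilon> > 0 \<Longrightarrow> interior (tri_set \<epsilon> (tri_at p q False)) = down_cell \<epsilon> p q"
  using interior_tri_down_subset[of \<epsilon>] interior_maximal[OF down_cell_subset_tri open_down_cell] by fastforce

lemma floor_divide_eq: fixes a \<epsilon> :: real assumes e: "\<epsilon> > 0" and "\<epsilon> * p \<le> a" "a < \<epsilon> * (p + 1)"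
  shows "\<lfloor>a / \<epsilon>\<rfloor> = p"
proof (rule floor_unique)
  show "of_int p \<le> a / \<epsilon>" using assms by (simp add: pos_le_divide_eq mult.commute)
  show "a / \<epsilon> < of_int p + 1" using assms by (simp add: pos_divide_less_eq mult.commute)
qed
lemma add_divide_less_iff: fixes a c \<epsilon> :: real assumes e: "\<epsilon> > 0" shows "a / \<epsilon> + c / \<epsilon> < r \<longleftrightarrow> a + c < \<epsilon> * r"
  using e by (simp add: add_divide_distrib[symmetric] pos_divide_less_eq mult.commute)

definition tri_containing :: "real \<Rightarrow> pt \<Rightarrow> pt \<times> pt \<times> pt" where
  "tri_containing \<epsilon> x = tri_at \<lfloor>inner dual1 x / \<epsilon>\<rfloor> \<lfloor>inner dual2 x / \<epsilon>\<rfloor>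
     (inner dual1 x / \<epsilon> + inner dual2 x / \<epsilon> < of_int \<lfloor>inner dual1 x / \<epsilon>\<rfloor> + of_int \<lfloor>inner dual2 x / \<epsilon>\<rfloor> + 1)"

lemma tri_containing_unique: assumes e: "\<epsilon> > 0" and t: "t \<in> Tri" and x: "x \<in> interior (tri_set \<epsilon> t)"
  shows "t = tri_containing \<epsilon> x"
proof -
  obtain p q b where tb: "t = tri_at p q b" using t Tri_iff_tri_at by blast
  obtain a c where xac: "inner dual1 x = a" "inner dual2 x = c" by blast
  show ?thesis
  proof (cases b)
    case True
    then have "x \<in> up_cell \<epsilon> p q" using x interior_tri_up[OF e, of p q] tb by simp
    then have h: "a > \<epsilon> * p" "c > \<epsilon> * q" "a + c < \<epsilon> * (p + q + 1)"
      by (auto simp: up_cell_def inner_add_left xac)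
    have f1: "\<lfloor>a / \<epsilon>\<rfloor> = p" using h by (intro floor_divide_eq[OF e]) (auto simp: algebra_simps)
    have f2: "\<lfloor>c / \<epsilon>\<rfloor> = q" using h by (intro floor_divide_eq[OF e]) (auto simp: algebra_simps)
    have f3: "a / \<epsilon> + c / \<epsilon> < p + q + 1" using h add_divide_less_iff[OF e] by simp
    show ?thesis unfolding tri_containing_def xac f1 f2 tb using f3 True by simp
  next
    case False
    then have "x \<in> down_cell \<epsilon> p q" using x interior_tri_down[OF e, of p q] tb by simp
    then have h: "a < \<epsilon> * (p + 1)" "c < \<epsilon> * (q + 1)" "a + c > \<epsilon> * (p + q + 1)"
      by (auto simp: down_cell_def inner_add_left xac)
    have f1: "\<lfloor>a / \<epsilon>\<rfloor> = p" using h by (intro floor_divide_eq[OF e]) (auto simp: algebra_simps)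
    have f2: "\<lfloor>c / \<epsilon>\<rfloor> = q" using h by (intro floor_divide_eq[OF e]) (auto simp: algebra_simps)
    have f3: "\<not> (a / \<epsilon> + c / \<epsilon> < p + q + 1)" using h add_divide_less_iff[OF e, of a c "p+q+1"] by simp
    show ?thesis unfolding tri_containing_def xac f1 f2 tb using f3 False by simp
  qed
qed

lemma chi_on_interior: assumes e: "\<epsilon> > 0" and t: "t \<in> Tri" and x: "x \<in> interior (tri_set \<epsilon> t)"
  shows "chi \<epsilon> u x = chiT \<epsilon> u t"
proof -
  have ex: "\<exists>t\<in>Tri. x \<in> interior (tri_set \<epsilon> t)" using t x by blast
  define s where "s = (SOME t. t \<in> Tri \<and> x \<in> interior (tri_set \<epsilon> t))"
  have "s \<in> Tri \<and> x \<in> interior (tri_set \<epsilon> s)" unfolding s_def by (rule someI[of _ t]) (use t x in blast)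
  then have "s = t" using tri_containing_unique[OF e] t x by metis
  then show ?thesis unfolding chi_def using ex s_def by simp
qed

lemma interior_tri_containing: assumes e: "\<epsilon> > 0"
  and g: "inner dual1 x / \<epsilon> \<notin> \<int>" "inner dual2 x / \<epsilon> \<notin> \<int>" "inner dual1 x / \<epsilon> + inner dual2 x / \<epsilon> \<notin> \<int>"
  shows "x \<in> interior (tri_set \<epsilon> (tri_containing \<epsilon> x))"
proof -
  obtain a c where xac: "inner dual1 x = a" "inner dual2 x = c" by blast
  define p where "p = \<lfloor>a / \<epsilon>\<rfloor>"
  define q where "q = \<lfloor>c / \<epsilon>\<rfloor>"
  have fl: "of_int p < a / \<epsilon>" "a / \<epsilon> < p + 1" "of_int q < c / \<epsilon>" "c / \<epsilon> < q + 1"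
    using g xac unfolding p_def q_def
    by (metis Ints_of_int of_int_floor_le order_le_neq_trans, linarith,
        metis Ints_of_int of_int_floor_le order_le_neq_trans, linarith)
  have fl': "\<epsilon> * p < a" "a < \<epsilon> * (p + 1)" "\<epsilon> * q < c" "c < \<epsilon> * (q + 1)"
    using fl e by (simp_all add: pos_less_divide_eq pos_divide_less_eq mult.commute)
  show ?thesis
  proof (cases "a / \<epsilon> + c / \<epsilon> < p + q + 1")
    case True
    then have "a + c < \<epsilon> * (p + q + 1)" using add_divide_less_iff[OF e] by simp
    then have "x \<in> up_cell \<epsilon> p q" using fl' by (auto simp: up_cell_def inner_add_left xac)
    then show ?thesis unfolding tri_containing_def xac p_def[symmetric] q_def[symmetric] using True interior_tri_up[OF e] by simp
  next
    case False
    have "a / \<epsilon> + c / \<epsilon> \<noteq> of_int (p + q + 1)" using g(3) xac by (metis Ints_of_int)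
    then have "a / \<epsilon> + c / \<epsilon> > p + q + 1" using False by simp
    then have "(a + c) / \<epsilon> > p + q + 1" by (simp add: add_divide_distrib)
    then have "a + c > \<epsilon> * (p + q + 1)" using e by (simp add: pos_less_divide_eq mult.commute)
    then have "x \<in> down_cell \<epsilon> p q" using fl' by (auto simp: down_cell_def inner_add_left xac)
    then show ?thesis unfolding tri_containing_def xac p_def[symmetric] q_def[symmetric] using False interior_tri_down[OF e] by simp
  qed
qed

lemma abs_inner_dual_le: "\<bar>inner dual1 y\<bar> \<le> 2 * norm y" "\<bar>inner dual2 y\<bar> \<le> 2 * norm y"
proof -
  obtain y1 y2 where y: "y = (y1, y2)" by fastforce
  have n1: "\<bar>y1\<bar> \<le> norm y" "\<bar>y2\<bar> \<le> norm y" using norm_fst_le[of y1 y2] norm_snd_le[of y2 y1] y by auto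
  have s3: "1 \<le> sqrt (3::real)" by simp
  have d: "\<bar>y2\<bar> / sqrt 3 \<le> \<bar>y2\<bar>"
    using divide_left_mono[OF s3, of "\<bar>y2\<bar>"] by simp
  have "inner dual1 y = y1 - y2 / sqrt 3" by (simp add: dual1_def y inner_prod_def)
  then have "\<bar>inner dual1 y\<bar> \<le> \<bar>y1\<bar> + \<bar>y2\<bar> / sqrt 3"
    using abs_triangle_ineq4[of y1 "y2 / sqrt 3"] by (simp add: abs_divide)
  then show "\<bar>inner dual1 y\<bar> \<le> 2 * norm y" using n1 d by linarith
  have "inner dual2 y = 2 * (y2 / sqrt 3)" by (simp add: dual2_def y inner_prod_def)
  then have "\<bar>inner dual2 y\<bar> = 2 * (\<bar>y2\<bar> / sqrt 3)" by (simp add: abs_mult abs_divide)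
  then show "\<bar>inner dual2 y\<bar> \<le> 2 * norm y" using n1 d by linarith
qed

lemma abs_lat_coords_le:
  assumes e: "\<epsilon> > 0" and R: "norm (\<epsilon> *\<^sub>R lat_pt m n) \<le> R"
  shows "\<bar>m\<bar> \<le> \<lceil>2 * R / \<epsilon>\<rceil>" "\<bar>n\<bar> \<le> \<lceil>2 * R / \<epsilon>\<rceil>"
proof -
  have "\<bar>\<epsilon> * m\<bar> \<le> 2 * R" "\<bar>\<epsilon> * n\<bar> \<le> 2 * R"
    using abs_inner_dual_le[of "\<epsilon> *\<^sub>R lat_pt m n"] R by simp_all
  then have "\<epsilon> * \<bar>real_of_int m\<bar> \<le> 2 * R" "\<epsilon> * \<bar>real_of_int n\<bar> \<le> 2 * R"
    using e by (simp_all add: abs_mult)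
  then have "\<bar>real_of_int m\<bar> \<le> 2 * R / \<epsilon>" "\<bar>real_of_int n\<bar> \<le> 2 * R / \<epsilon>"
    using e by (simp_all add: pos_le_divide_eq mult.commute)
  then show "\<bar>m\<bar> \<le> \<lceil>2 * R / \<epsilon>\<rceil>" "\<bar>n\<bar> \<le> \<lceil>2 * R / \<epsilon>\<rceil>" by linarith+
qed

lemma finite_TriIn: assumes e: "\<epsilon> > 0" and b: "A \<subseteq> cball 0 R" shows "finite (TriIn \<epsilon> A)"
proof -
  define M where "M = \<lceil>2 * R / \<epsilon>\<rceil> + 1"
  have "TriIn \<epsilon> A \<subseteq> (\<lambda>(p,q,b). tri_at p q b) ` ({-M..M} \<times> {-M..M} \<times> UNIV)"
  proof
    fix t assume t: "t \<in> TriIn \<epsilon> A"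
    then obtain p q b where tb: "t = tri_at p q b" using Tri_iff_tri_at TriIn_def by auto
    have "lat_pt (p+1) q \<in> tri_at_verts p q b" by (simp add: tri_at_verts_def)
    then have "\<epsilon> *\<^sub>R lat_pt (p+1) q \<in> tri_set \<epsilon> t" unfolding tb tri_set_tri_at by (intro hull_inc) auto
    then have "norm (\<epsilon> *\<^sub>R lat_pt (p+1) q) \<le> R" using t b TriIn_def by auto
    from abs_lat_coords_le[OF e this] show "t \<in> (\<lambda>(p,q,b). tri_at p q b) ` ({-M..M} \<times> {-M..M} \<times> UNIV)"
      unfolding M_def tb by (intro image_eqI[of _ _ "(p,q,b)"]) auto
  qed
  then show ?thesis by (rule finite_subset) auto
qed

lemma Lat_eq: "Lat = {lat_pt m n | m n. True}"
proof -
  have "of_int a *\<^sub>R e1 + of_int b *\<^sub>R e2 = lat_pt a b" for a b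
    by (simp add: e1_def e2_def lat_pt_def)
  then show ?thesis unfolding Lat_def by auto
qed

lemma Lat1_sub: "Lat1 \<subseteq> Lat" unfolding Lat1_eq Lat_eq by auto
lemma Lat2_sub: "Lat2 \<subseteq> Lat" unfolding Lat2_eq Lat_eq by auto
lemma Lat3_sub: "Lat3 \<subseteq> Lat" unfolding Lat3_eq Lat_eq by auto

lemma Tri_verts_Lat: "(i,j,k) \<in> Tri \<Longrightarrow> i \<in> Lat \<and> j \<in> Lat \<and> k \<in> Lat"
  unfolding Tri_def using Lat1_sub Lat2_sub Lat3_sub by auto

lemma Ftri_nonneg: "\<epsilon> \<ge> 0 \<Longrightarrow> Ftri \<epsilon> u t \<ge> 0"
  by (cases t) (auto simp: Ftri_def)

lemma Fen_nonneg: "\<epsilon> \<ge> 0 \<Longrightarrow> Fen \<epsilon> u A \<ge> 0"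
  unfolding Fen_def by (intro sum_nonneg Ftri_nonneg)

lemma tri_set_nonempty: "\<exists>y. y \<in> tri_set \<epsilon> t"
  by (cases t) (auto simp: tri_set_def intro: hull_inc)

lemma TriIn_mono: "A \<subseteq> B \<Longrightarrow> TriIn \<epsilon> A \<subseteq> TriIn \<epsilon> B"
  unfolding TriIn_def by auto

lemma TriIn_disjoint: "A \<inter> B = {} \<Longrightarrow> TriIn \<epsilon> A \<inter> TriIn \<epsilon> B = {}"
  unfolding TriIn_def using tri_set_nonempty by blast

lemma sum_Fen_disjoint_le: assumes e: "\<epsilon> \<ge> 0" and f: "finite (TriIn \<epsilon> B)" and I: "finite I"
  and s: "\<And>k. k \<in> I \<Longrightarrow> A k \<subseteq> B"
  and d: "\<And>k l. k \<in> I \<Longrightarrow> l \<in> I \<Longrightarrow> k \<noteq> l \<Longrightarrow> A k \<inter> A l = {}"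
  shows "(\<Sum>k\<in>I. Fen \<epsilon> u (A k)) \<le> Fen \<epsilon> u B"
proof -
  have fk: "finite (TriIn \<epsilon> (A k))" if "k \<in> I" for k using finite_subset[OF TriIn_mono[OF s[OF that]] f] .
  have "(\<Sum>k\<in>I. Fen \<epsilon> u (A k)) = sum (Ftri \<epsilon> u) (\<Union>k\<in>I. TriIn \<epsilon> (A k))"
    unfolding Fen_def using I fk TriIn_disjoint[OF d] by (subst sum.UNION_disjoint) auto
  also have "\<dots> \<le> sum (Ftri \<epsilon> u) (TriIn \<epsilon> B)"
    using f TriIn_mono[OF s] by (intro sum_mono2) (auto intro: Ftri_nonneg[OF e])
  finally show ?thesis unfolding Fen_def .
qed

section \<open>Transfer under lattice translations and scaling\<close>

definition tri_shift :: "pt \<Rightarrow> pt \<times> pt \<times> pt \<Rightarrow> pt \<times> pt \<times> pt" where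
  "tri_shift w t = (case t of (i, j, k) \<Rightarrow> (i + w, j + w, k + w))"

lemma tri_shift_tri_at: assumes "m mod 3 = n mod 3"
  shows "tri_shift (lat_pt m n) (tri_at p q b) = tri_at (p + m) (q + n) b"
proof -
  have "(p + m - (q + n)) mod 3 = (p - q) mod 3" using assms by presburger
  then show ?thesis by (simp add: tri_at_def Let_def tri_shift_def lat_pt_add algebra_simps)
qed

lemma tri_shift_Tri: assumes w: "w \<in> Lat1" and t: "t \<in> Tri" shows "tri_shift w t \<in> Tri"
proof -
  obtain m n where w': "w = lat_pt m n" "m mod 3 = n mod 3" using w unfolding Lat1_eq by blast
  obtain p q b where "t = tri_at p q b" using t Tri_iff_tri_at by auto
  then show ?thesis using tri_shift_tri_at[OF w'(2)] w'(1) tri_at_Tri by simp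
qed

lemma uminus_Lat1: "w \<in> Lat1 \<Longrightarrow> - w \<in> Lat1"
proof -
  assume "w \<in> Lat1"
  then obtain m n where w': "w = lat_pt m n" "m mod 3 = n mod 3" unfolding Lat1_eq by blast
  have "- w = lat_pt (-m) (-n)" using w'(1) by (simp add: lat_pt_def)
  moreover have "(-m) mod 3 = (-n) mod 3" using w'(2) by presburger
  ultimately show "- w \<in> Lat1" unfolding Lat1_eq by auto
qed

lemma tri_shift_uminus [simp]: "tri_shift (- w) (tri_shift w t) = t"
  by (cases t) (simp add: tri_shift_def)

lemma inj_tri_shift: "inj (tri_shift w)"
  by (metis injI tri_shift_uminus)

definition aff :: "pt \<Rightarrow> real \<Rightarrow> pt \<Rightarrow> pt" where "aff c s x = c + s *\<^sub>R x"

lemma inj_aff: "s \<noteq> 0 \<Longrightarrow> inj (aff c s)"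
  unfolding aff_def by (rule injI) simp

lemma interior_aff: assumes s: "s \<noteq> 0" shows "interior (aff c s ` S) = aff c s ` interior S"
proof -
  have l: "linear (\<lambda>x::pt. s *\<^sub>R x)" by (simp add: linear_scaleR)
  have i: "inj (\<lambda>x::pt. s *\<^sub>R x)" using s by (auto intro: injI)
  have "aff c s ` S = (+) c ` ((\<lambda>x. s *\<^sub>R x) ` S)" unfolding aff_def by (auto simp: image_image)
  then have "interior (aff c s ` S) = (+) c ` ((\<lambda>x. s *\<^sub>R x) ` interior S)"
    by (simp add: interior_translation interior_injective_linear_image[OF l i])
  also have "\<dots> = aff c s ` interior S" unfolding aff_def by (auto simp: image_image)
  finally show ?thesis .
qed

lemma tri_set_shift: assumes s: "s > 0"
  shows "tri_set \<epsilon> (tri_shift w t) = aff (\<epsilon> *\<^sub>R w) s ` tri_set (\<epsilon> / s) t"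
proof -
  obtain i j k where t: "t = (i,j,k)" by (metis prod_cases3)
  have e: "s * (\<epsilon> / s) = \<epsilon>" using s by simp
  have "aff (\<epsilon> *\<^sub>R w) s ` tri_set (\<epsilon> / s) t = convex hull (aff (\<epsilon> *\<^sub>R w) s ` {(\<epsilon> / s) *\<^sub>R i, (\<epsilon> / s) *\<^sub>R j, (\<epsilon> / s) *\<^sub>R k})"
    unfolding aff_def tri_set_def t by (simp only: prod.case convex_hull_affinity)
  also have "\<dots> = tri_set \<epsilon> (tri_shift w t)"
    unfolding aff_def tri_set_def t tri_shift_def using e by (simp add: scaleR_add_right add.commute)
  finally show ?thesis by simp
qed

lemma TriIn_shift: assumes s: "s > 0" and w: "w \<in> Lat1"
  shows "TriIn \<epsilon> (aff (\<epsilon> *\<^sub>R w) s ` Q) = tri_shift w ` TriIn (\<epsilon> / s) Q"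
proof (rule set_eqI, rule iffI)
  fix t' assume t': "t' \<in> TriIn \<epsilon> (aff (\<epsilon> *\<^sub>R w) s ` Q)"
  define t where "t = tri_shift (- w) t'"
  have tt: "t' = tri_shift w t" unfolding t_def by (cases t') (simp add: tri_shift_def)
  have "t \<in> Tri" unfolding t_def using t' uminus_Lat1[OF w] tri_shift_Tri TriIn_def by auto
  moreover have "tri_set (\<epsilon> / s) t \<subseteq> Q"
  proof -
    have "tri_set \<epsilon> (tri_shift w t) \<subseteq> aff (\<epsilon> *\<^sub>R w) s ` Q"
      using t' unfolding TriIn_def tt by blast
    then have "aff (\<epsilon> *\<^sub>R w) s ` tri_set (\<epsilon> / s) t \<subseteq> aff (\<epsilon> *\<^sub>R w) s ` Q"
      unfolding tri_set_shift[OF s] .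
    then show ?thesis using inj_image_subset_iff[OF inj_aff[of s]] s by auto
  qed
  ultimately show "t' \<in> tri_shift w ` TriIn (\<epsilon> / s) Q" unfolding tt TriIn_def by auto
next
  fix t' assume "t' \<in> tri_shift w ` TriIn (\<epsilon> / s) Q"
  then obtain t where tt: "t' = tri_shift w t" and t: "t \<in> Tri" "tri_set (\<epsilon> / s) t \<subseteq> Q"
    unfolding TriIn_def by auto
  have "tri_set \<epsilon> (tri_shift w t) \<subseteq> aff (\<epsilon> *\<^sub>R w) s ` Q"
    unfolding tri_set_shift[OF s] using t(2) by (rule image_mono)
  then show "t' \<in> TriIn \<epsilon> (aff (\<epsilon> *\<^sub>R w) s ` Q)"
    unfolding TriIn_def tt using t tri_shift_Tri[OF w] by blast
qed

lemma Ftri_shift: assumes s: "s > 0"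
  shows "Ftri (\<epsilon> / s) (\<lambda>x. u (aff (\<epsilon> *\<^sub>R w) s x)) t = Ftri \<epsilon> u (tri_shift w t) / s"
proof -
  obtain i j k where t: "t = (i,j,k)" by (metis prod_cases3)
  have e: "s * (\<epsilon> / s) = \<epsilon>" using s by simp
  show ?thesis unfolding Ftri_def t tri_shift_def aff_def using e
    by (simp add: scaleR_add_right add.commute)
qed

lemma Fen_shift: assumes s: "s > 0" and w: "w \<in> Lat1"
  shows "Fen (\<epsilon> / s) (\<lambda>x. u (aff (\<epsilon> *\<^sub>R w) s x)) Q = Fen \<epsilon> u (aff (\<epsilon> *\<^sub>R w) s ` Q) / s"
  unfolding Fen_def TriIn_shift[OF s w] Ftri_shift[OF s]
  by (simp add: sum.reindex[OF inj_on_subset[OF inj_tri_shift]] sum_divide_distrib)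

lemma chiT_shift: assumes s: "s > 0"
  shows "chiT (\<epsilon> / s) (\<lambda>x. u (aff (\<epsilon> *\<^sub>R w) s x)) t = chiT \<epsilon> u (tri_shift w t)"
proof -
  obtain i j k where t: "t = (i,j,k)" by (metis prod_cases3)
  have e: "s * (\<epsilon> / s) = \<epsilon>" using s by simp
  show ?thesis unfolding chiT_def t tri_shift_def aff_def using e
    by (simp add: scaleR_add_right add.commute)
qed

lemma chi_shift: assumes s: "s > 0" and w: "w \<in> Lat1" and e: "\<epsilon> > 0"
  shows "chi (\<epsilon> / s) (\<lambda>x. u (aff (\<epsilon> *\<^sub>R w) s x)) x = chi \<epsilon> u (aff (\<epsilon> *\<^sub>R w) s x)"
proof (cases "\<exists>t\<in>Tri. x \<in> interior (tri_set (\<epsilon> / s) t)")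
  case True
  then obtain t where t: "t \<in> Tri" "x \<in> interior (tri_set (\<epsilon> / s) t)" by blast
  have e': "\<epsilon> / s > 0" using e s by simp
  have "aff (\<epsilon> *\<^sub>R w) s x \<in> interior (tri_set \<epsilon> (tri_shift w t))"
    unfolding tri_set_shift[OF s] interior_aff[of s, OF less_imp_neq[OF s, symmetric]] using t by auto
  then have "chi \<epsilon> u (aff (\<epsilon> *\<^sub>R w) s x) = chiT \<epsilon> u (tri_shift w t)"
    using chi_on_interior[OF e tri_shift_Tri[OF w t(1)]] by blast
  moreover have "chi (\<epsilon> / s) (\<lambda>x. u (aff (\<epsilon> *\<^sub>R w) s x)) x = chiT (\<epsilon> / s) (\<lambda>x. u (aff (\<epsilon> *\<^sub>R w) s x)) t"
    using chi_on_interior[OF e' t] .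
  ultimately show ?thesis using chiT_shift[OF s] by simp
next
  case False
  have "\<not> (\<exists>t'\<in>Tri. aff (\<epsilon> *\<^sub>R w) s x \<in> interior (tri_set \<epsilon> t'))"
  proof
    assume "\<exists>t'\<in>Tri. aff (\<epsilon> *\<^sub>R w) s x \<in> interior (tri_set \<epsilon> t')"
    then obtain t' where t': "t' \<in> Tri" "aff (\<epsilon> *\<^sub>R w) s x \<in> interior (tri_set \<epsilon> t')" by blast
    define t where "t = tri_shift (- w) t'"
    have tt: "t' = tri_shift w t" unfolding t_def by (cases t') (simp add: tri_shift_def)
    have "t \<in> Tri" unfolding t_def using t' uminus_Lat1[OF w] tri_shift_Tri by auto
    moreover have "x \<in> interior (tri_set (\<epsilon> / s) t)"
      using t'(2) unfolding tt tri_set_shift[OF s] interior_aff[of s, OF less_imp_neq[OF s, symmetric]]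
      using inj_image_mem_iff[OF inj_aff, of s] s by auto
    ultimately show False using False by blast
  qed
  then show ?thesis using False unfolding chi_def by simp
qed

lemma SF_shift: assumes s: "s > 0" and w: "w \<in> Lat1" and u: "u \<in> SF \<epsilon>"
  shows "(\<lambda>x. u (aff (\<epsilon> *\<^sub>R w) s x)) \<in> SF (\<epsilon> / s)"
proof -
  have e: "s * (\<epsilon> / s) = \<epsilon>" using s by simp
  obtain m n where w': "w = lat_pt m n" using w unfolding Lat1_eq by blast
  have "u (\<epsilon> *\<^sub>R w + s *\<^sub>R (\<epsilon> / s) *\<^sub>R x) \<in> sphere 0 1" if x: "x \<in> Lat" for x
  proof -
    obtain a b where x': "x = lat_pt a b" using x unfolding Lat_eq by blast
    have "\<epsilon> *\<^sub>R w + s *\<^sub>R (\<epsilon> / s) *\<^sub>R x = \<epsilon> *\<^sub>R lat_pt (m + a) (n + b)"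
      using e by (simp add: w' x' lat_pt_add[symmetric] scaleR_add_right)
    moreover have "lat_pt (m + a) (n + b) \<in> Lat" unfolding Lat_eq by auto
    ultimately show ?thesis using u unfolding SF_def by auto
  qed
  then show ?thesis unfolding SF_def aff_def by auto
qed

section \<open>Chirality and the L1 distance\<close>

lemma abs_cross2_le_1: assumes "norm v \<le> 1" "norm w \<le> 1" shows "\<bar>cross2 v w\<bar> \<le> 1"
proof -
  have "cross2 v w = inner v (snd w, - fst w)" by (simp add: cross2_def inner_prod_def)
  moreover have "norm (snd w, - fst w) = norm w"
    by (simp add: norm_Pair norm_prod_def add.commute)
  ultimately have "\<bar>cross2 v w\<bar> \<le> norm v * norm w" using Cauchy_Schwarz_ineq2[of v "(snd w, - fst w)"] by simp
  also have "\<dots> \<le> 1" using assms by (simp add: mult_le_one)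
  finally show ?thesis .
qed

lemma abs_chiT_le_2: assumes u: "u \<in> SF \<epsilon>" and t: "t \<in> Tri" shows "\<bar>chiT \<epsilon> u t\<bar> \<le> 2"
proof -
  obtain i j k where tt: "t = (i,j,k)" by (metis prod_cases3)
  have v: "i \<in> Lat" "j \<in> Lat" "k \<in> Lat" using Tri_verts_Lat t tt by auto
  have n: "norm (u (\<epsilon> *\<^sub>R i)) \<le> 1" "norm (u (\<epsilon> *\<^sub>R j)) \<le> 1" "norm (u (\<epsilon> *\<^sub>R k)) \<le> 1"
    using u v unfolding SF_def by auto
  have c: "\<bar>cross2 (u (\<epsilon> *\<^sub>R i)) (u (\<epsilon> *\<^sub>R j)) + cross2 (u (\<epsilon> *\<^sub>R j)) (u (\<epsilon> *\<^sub>R k)) + cross2 (u (\<epsilon> *\<^sub>R k)) (u (\<epsilon> *\<^sub>R i))\<bar> \<le> 3"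
    using abs_cross2_le_1[OF n(1) n(2)] abs_cross2_le_1[OF n(2) n(3)] abs_cross2_le_1[OF n(3) n(1)] by linarith
  define X where "X = cross2 (u (\<epsilon> *\<^sub>R i)) (u (\<epsilon> *\<^sub>R j)) + cross2 (u (\<epsilon> *\<^sub>R j)) (u (\<epsilon> *\<^sub>R k)) + cross2 (u (\<epsilon> *\<^sub>R k)) (u (\<epsilon> *\<^sub>R i))"
  have s: "2 / (3 * sqrt 3) * 3 \<le> (2::real)" by (simp add: field_simps)
  have "chiT \<epsilon> u t = 2 / (3 * sqrt 3) * X" unfolding chiT_def tt X_def by simp
  then have "\<bar>chiT \<epsilon> u t\<bar> = 2 / (3 * sqrt 3) * \<bar>X\<bar>" by (simp add: abs_mult)
  also have "\<dots> \<le> 2 / (3 * sqrt 3) * 3" using c unfolding X_def[symmetric] by (intro mult_left_mono) auto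
  finally show ?thesis using s by linarith
qed

lemma abs_chi_le_2: assumes u: "u \<in> SF \<epsilon>" shows "\<bar>chi \<epsilon> u x\<bar> \<le> 2"
proof (cases "\<exists>t\<in>Tri. x \<in> interior (tri_set \<epsilon> t)")
  case True
  then have "(SOME t. t \<in> Tri \<and> x \<in> interior (tri_set \<epsilon> t)) \<in> Tri" by (metis (mono_tags, lifting) someI_ex)
  then show ?thesis using True abs_chiT_le_2[OF u] unfolding chi_def by simp
qed (simp add: chi_def)

lemma chi_borel_measurable: assumes e: "\<epsilon> > 0" shows "chi \<epsilon> u \<in> borel_measurable borel"
proof (rule borel_measurableI)
  fix S :: "real set" assume "open S"
  define G where "G = \<Union>{interior (tri_set \<epsilon> t) | t. t \<in> Tri \<and> chiT \<epsilon> u t \<in> S}"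
  define Z where "Z = - \<Union>{interior (tri_set \<epsilon> t) | t. t \<in> Tri}"
  have "chi \<epsilon> u -` S = G \<union> (if 0 \<in> S then Z else {})"
  proof (rule set_eqI)
    fix x show "x \<in> chi \<epsilon> u -` S \<longleftrightarrow> x \<in> G \<union> (if 0 \<in> S then Z else {})"
    proof (cases "\<exists>t\<in>Tri. x \<in> interior (tri_set \<epsilon> t)")
      case True
      then obtain t where t: "t \<in> Tri" "x \<in> interior (tri_set \<epsilon> t)" by blast
      have "x \<in> G \<longleftrightarrow> chiT \<epsilon> u t \<in> S"
      proof
        assume "x \<in> G"
        then obtain t' where "t' \<in> Tri" "chiT \<epsilon> u t' \<in> S" "x \<in> interior (tri_set \<epsilon> t')" unfolding G_def by blast
        then show "chiT \<epsilon> u t \<in> S" using tri_containing_unique[OF e] t by metis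
      next
        assume "chiT \<epsilon> u t \<in> S" then show "x \<in> G" unfolding G_def using t by blast
      qed
      moreover have "x \<notin> Z" unfolding Z_def using t by blast
      ultimately show ?thesis using chi_on_interior[OF e t] by simp
    next
      case False
      then have "x \<notin> G" "x \<in> Z" unfolding G_def Z_def by blast+
      then show ?thesis using False unfolding chi_def by simp
    qed
  qed
  moreover have "G \<in> sets borel" unfolding G_def by (intro borel_open open_Union) auto
  moreover have "Z \<in> sets borel" unfolding Z_def by (intro borel_closed closed_Compl open_Union) auto
  ultimately show "chi \<epsilon> u -` S \<inter> space borel \<in> sets borel" by auto
qed

lemma chinu_borel_measurable: "chinu \<nu> \<in> borel_measurable borel"
  unfolding chinu_def by measurable

lemma abs_chinu_le_1: "\<bar>chinu \<nu> x\<bar> \<le> 1" by (simp add: chinu_def)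

lemma chi_chinu_diff_measurable: "\<epsilon> > 0 \<Longrightarrow> (\<lambda>x. \<bar>chi \<epsilon> u x - chinu \<nu> x\<bar>) \<in> borel_measurable borel"
  using chi_borel_measurable chinu_borel_measurable by measurable

lemma integrable_chi_chinu_diff: assumes e: "\<epsilon> > 0" and u: "u \<in> SF \<epsilon>" and A: "A \<in> sets borel" "bounded A"
  shows "integrable lborel (\<lambda>x. indicator A x *\<^sub>R \<bar>chi \<epsilon> u x - chinu \<nu> x\<bar>)"
proof (rule integrableI_bounded_set[where A=A and B=3])
  show "A \<in> sets lborel" using A by simp
  show "(\<lambda>x. indicator A x *\<^sub>R \<bar>chi \<epsilon> u x - chinu \<nu> x\<bar>) \<in> borel_measurable lborel"
    using chi_chinu_diff_measurable[OF e] A by measurable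
  show "emeasure lborel A < \<infinity>" using emeasure_bounded_finite[OF A(2)] .
  have "\<bar>chi \<epsilon> u x - chinu \<nu> x\<bar> \<le> 3" for x using abs_chi_le_2[OF u, of x] abs_chinu_le_1[of \<nu> x] by linarith
  then show "AE x in lborel. x \<in> A \<longrightarrow> norm (indicator A x *\<^sub>R \<bar>chi \<epsilon> u x - chinu \<nu> x\<bar>) \<le> 3"
    by (auto simp: indicator_def)
  show "AE x in lborel. x \<notin> A \<longrightarrow> indicator A x *\<^sub>R \<bar>chi \<epsilon> u x - chinu \<nu> x\<bar> = 0" by auto
qed

lemma L1dist_nonneg: "L1dist A f g \<ge> 0"
  unfolding L1dist_def set_lebesgue_integral_def by (rule integral_nonneg_AE) (auto simp: indicator_def)

lemma sum_indicator_le: assumes I: "finite I" and s: "\<And>k. k \<in> I \<Longrightarrow> S k \<subseteq> Q"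
  and d: "\<And>k l. k \<in> I \<Longrightarrow> l \<in> I \<Longrightarrow> k \<noteq> l \<Longrightarrow> S k \<inter> S l = {}"
  shows "(\<Sum>k\<in>I. indicator (S k) x) \<le> (indicator Q x :: real)"
proof (cases "\<exists>k\<in>I. x \<in> S k")
  case True
  then obtain k where k: "k \<in> I" "x \<in> S k" by blast
  have z: "(\<Sum>l\<in>I - {k}. indicator (S l) x) = (0::real)"
    using d k by (intro sum.neutral) (auto simp: indicator_def)
  have "(\<Sum>k\<in>I. indicator (S k) x) = indicator (S k) x + (\<Sum>l\<in>I - {k}. indicator (S l) x :: real)"
    using I k by (simp add: sum.remove)
  then show ?thesis using z k s by (auto simp: indicator_def)
next
  case False then show ?thesis by (simp add: indicator_def)
qed

lemma sum_L1dist_disjoint_le: assumes e: "\<epsilon> > 0" and u: "u \<in> SF \<epsilon>" and Q: "Q \<in> sets borel" "bounded Q"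
  and I: "finite I" and S: "\<And>k. k \<in> I \<Longrightarrow> S k \<in> sets borel" and s: "\<And>k. k \<in> I \<Longrightarrow> S k \<subseteq> Q"
  and d: "\<And>k l. k \<in> I \<Longrightarrow> l \<in> I \<Longrightarrow> k \<noteq> l \<Longrightarrow> S k \<inter> S l = {}"
  shows "(\<Sum>k\<in>I. L1dist (S k) (chi \<epsilon> u) (chinu \<nu>)) \<le> L1dist Q (chi \<epsilon> u) (chinu \<nu>)"
proof -
  have bS: "bounded (S k)" if "k \<in> I" for k using s[OF that] Q(2) bounded_subset by blast
  have int: "integrable lborel (\<lambda>x. indicator (S k) x *\<^sub>R \<bar>chi \<epsilon> u x - chinu \<nu> x\<bar>)" if "k \<in> I" for k
    using integrable_chi_chinu_diff[OF e u S[OF that] bS[OF that]] .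
  have "(\<Sum>k\<in>I. L1dist (S k) (chi \<epsilon> u) (chinu \<nu>)) = integral\<^sup>L lborel (\<lambda>x. \<Sum>k\<in>I. indicator (S k) x *\<^sub>R \<bar>chi \<epsilon> u x - chinu \<nu> x\<bar>)"
    unfolding L1dist_def set_lebesgue_integral_def by (rule sym, rule Bochner_Integration.integral_sum) (rule int)
  also have "\<dots> \<le> integral\<^sup>L lborel (\<lambda>x. indicator Q x *\<^sub>R \<bar>chi \<epsilon> u x - chinu \<nu> x\<bar>)"
  proof (rule Bochner_Integration.integral_mono)
    show "integrable lborel (\<lambda>x. \<Sum>k\<in>I. indicator (S k) x *\<^sub>R \<bar>chi \<epsilon> u x - chinu \<nu> x\<bar>)" using int by auto
    show "integrable lborel (\<lambda>x. indicator Q x *\<^sub>R \<bar>chi \<epsilon> u x - chinu \<nu> x\<bar>)" using integrable_chi_chinu_diff[OF e u Q] .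
    fix x
    have "(\<Sum>k\<in>I. indicator (S k) x *\<^sub>R \<bar>chi \<epsilon> u x - chinu \<nu> x\<bar>) = (\<Sum>k\<in>I. indicator (S k) x) * \<bar>chi \<epsilon> u x - chinu \<nu> x\<bar>"
      by (simp add: sum_distrib_right)
    also have "\<dots> \<le> indicator Q x * \<bar>chi \<epsilon> u x - chinu \<nu> x\<bar>"
      using sum_indicator_le[OF I s d, of _ x] by (intro mult_right_mono) auto
    finally show "(\<Sum>k\<in>I. indicator (S k) x *\<^sub>R \<bar>chi \<epsilon> u x - chinu \<nu> x\<bar>) \<le> indicator Q x *\<^sub>R \<bar>chi \<epsilon> u x - chinu \<nu> x\<bar>" by simp
  qed
  finally show ?thesis unfolding L1dist_def set_lebesgue_integral_def .
qed

lemma integral_lborel_affine: fixes f :: "pt \<Rightarrow> real" assumes s: "s > 0" and f: "f \<in> borel_measurable borel"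
  shows "integral\<^sup>L lborel f = s\<^sup>2 * integral\<^sup>L lborel (\<lambda>x. f (c + s *\<^sub>R x))"
proof -
  have s0: "s \<noteq> 0" using s by simp
  have [measurable]: "(\<lambda>x. c + s *\<^sub>R x) \<in> borel_measurable borel" by measurable
  show ?thesis
    by (subst lborel_affine[OF s0, of c]) (use f s in \<open>simp add: integral_density integral_distr power2_eq_square\<close>)
qed

lemma open_aff: assumes s: "s > 0" and Q: "open Q" shows "open (aff c s ` Q)"
  using interior_aff[of s c Q] s Q by (metis interior_open open_interior less_irrefl)

lemma set_integral_aff: assumes s: "s > 0" and Q: "open Q" and h: "h \<in> borel_measurable borel"
  shows "(LINT x:Q|lborel. h (aff c s x)) = (LINT y:(aff c s ` Q)|lborel. h y) / s\<^sup>2"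
proof -
  have oQ: "open (aff c s ` Q)" using open_aff[OF s Q] .
  have m: "(\<lambda>y. indicator (aff c s ` Q) y *\<^sub>R h y) \<in> borel_measurable borel"
    using borel_open[OF oQ] h by measurable
  have ind: "indicator ((\<lambda>x. c + s *\<^sub>R x) ` Q) (c + s *\<^sub>R x) = (indicator Q x :: real)" for x
    using inj_image_mem_iff[OF inj_aff, of s c x Q] s unfolding aff_def indicator_def by auto
  have "(LINT y:(aff c s ` Q)|lborel. h y) = s\<^sup>2 * (LINT x:Q|lborel. h (aff c s x))"
    unfolding set_lebesgue_integral_def
    by (subst integral_lborel_affine[OF s m, of c]) (simp add: aff_def ind)
  then show ?thesis using s by simp
qed

lemma hyperplane_null_sets: assumes "a \<noteq> 0" shows "{x::pt. inner a x = b} \<in> null_sets lborel"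
proof -
  have "{x::pt. inner a x = b} \<in> null_sets lebesgue"
    using negligible_hyperplane[of a b] assms negligible_iff_null_sets by auto
  moreover have "{x::pt. inner a x = b} \<in> sets lborel"
    by (simp add: closed_hyperplane)
  ultimately show ?thesis using null_sets_completion_iff[of "{x::pt. inner a x = b}" lborel] by simp
qed

lemma set_integral_bounded_tendsto_0:
  fixes f :: "nat \<Rightarrow> pt \<Rightarrow> real"
  assumes Q: "Q \<in> sets borel" "bounded Q"
    and f: "\<And>n. f n \<in> borel_measurable borel" and C: "\<And>n x. \<bar>f n x\<bar> \<le> C"
    and ae: "AE x in lborel. (\<lambda>n. f n x) \<longlonglongrightarrow> 0"
  shows "(\<lambda>n. LINT x:Q|lborel. f n x) \<longlonglongrightarrow> 0"
proof -
  define g where "g n x = indicator Q x *\<^sub>R f n x" for n x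
  have "(\<lambda>n. integral\<^sup>L lborel (g n)) \<longlonglongrightarrow> integral\<^sup>L lborel (\<lambda>x::pt. 0::real)"
  proof (rule Bochner_Integration.integral_dominated_convergence[where w = "\<lambda>x. C * indicator Q x"])
    show "(\<lambda>x::pt. 0::real) \<in> borel_measurable lborel" by simp
    show "g n \<in> borel_measurable lborel" for n unfolding g_def using f[of n] Q by measurable
    show "integrable lborel (\<lambda>x. C * indicator Q x)"
      using Q emeasure_bounded_finite[OF Q(2)] by (intro integrable_mult_right integrable_real_indicator) auto
    show "AE x in lborel. (\<lambda>n. g n x) \<longlonglongrightarrow> 0"
      using ae by eventually_elim (auto simp: g_def indicator_def)
    show "AE x in lborel. norm (g n x) \<le> C * indicator Q x" for n
      using C by (auto simp: g_def indicator_def)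
  qed
  then show ?thesis unfolding set_lebesgue_integral_def g_def by simp
qed

lemma chinu_translate_L1_tendsto_0: assumes nu: "\<nu> \<noteq> 0" and s: "s > 0" and Q: "Q \<in> sets borel" "bounded Q"
  and c: "(\<lambda>n. inner (c n) \<nu>) \<longlonglongrightarrow> 0"
  shows "(\<lambda>n. LINT x:Q|lborel. \<bar>chinu \<nu> (aff (c n) s x) - chinu \<nu> x\<bar>) \<longlonglongrightarrow> 0"
proof (rule set_integral_bounded_tendsto_0[OF Q, where C = 2])
  show "(\<lambda>x. \<bar>chinu \<nu> (aff (c n) s x) - chinu \<nu> x\<bar>) \<in> borel_measurable borel" for n
    using chinu_borel_measurable[of \<nu>] unfolding aff_def by measurable
  show "\<bar>\<bar>chinu \<nu> (aff (c n) s x) - chinu \<nu> x\<bar>\<bar> \<le> 2" for n x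
    by (simp add: chinu_def)
  have pw: "(\<lambda>n. \<bar>chinu \<nu> (aff (c n) s x) - chinu \<nu> x\<bar>) \<longlonglongrightarrow> 0" if x: "inner \<nu> x \<noteq> 0" for x
  proof -
    have lim: "(\<lambda>n. inner (aff (c n) s x) \<nu>) \<longlonglongrightarrow> s * inner x \<nu>"
      unfolding aff_def inner_add_left inner_scaleR_left using tendsto_add[OF c tendsto_const, of "s * inner x \<nu>"] by simp
    have "eventually (\<lambda>n. chinu \<nu> (aff (c n) s x) = chinu \<nu> x) sequentially"
    proof (cases "inner x \<nu> > 0")
      case True
      then have "s * inner x \<nu> > 0" using s by simp
      from order_tendstoD(1)[OF lim this] show ?thesis
        by eventually_elim (use True in \<open>auto simp: chinu_def\<close>)
    next
      case False
      then have "inner x \<nu> < 0" using x by (simp add: inner_commute)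
      then have "s * inner x \<nu> < 0" using s by (simp add: mult_pos_neg)
      from order_tendstoD(2)[OF lim this] show ?thesis
        by eventually_elim (use \<open>inner x \<nu> < 0\<close> in \<open>auto simp: chinu_def\<close>)
    qed
    then show ?thesis by (rule tendsto_eventually[OF eventually_mono]) simp
  qed
  show "AE x in lborel. (\<lambda>n. \<bar>chinu \<nu> (aff (c n) s x) - chinu \<nu> x\<bar>) \<longlonglongrightarrow> 0"
    using AE_not_in[OF hyperplane_null_sets[OF nu, of 0]] by eventually_elim (use pw in auto)
qed

section \<open>Rotated coordinates\<close>

lemma unit_sq: assumes "\<nu> \<in> sphere (0::pt) 1" shows "(fst \<nu>)\<^sup>2 + (snd \<nu>)\<^sup>2 = 1"
proof -
  have "norm \<nu> = 1" using assms by simp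
  then have "sqrt ((fst \<nu>)\<^sup>2 + (snd \<nu>)\<^sup>2) = 1" by (simp add: norm_prod_def)
  then show ?thesis by (metis real_sqrt_eq_1_iff)
qed

lemma rot_decomp: assumes "\<nu> \<in> sphere (0::pt) 1"
  shows "x = inner x (perp \<nu>) *\<^sub>R perp \<nu> + inner x \<nu> *\<^sub>R \<nu>"
proof -
  obtain a b where nu: "\<nu> = (a, b)" by fastforce
  obtain x1 x2 where xx: "x = (x1, x2)" by fastforce
  have ab: "a\<^sup>2 + b\<^sup>2 = 1" using unit_sq[OF assms] nu by simp
  have "x1 = x1 * (a\<^sup>2 + b\<^sup>2)" "x2 = x2 * (a\<^sup>2 + b\<^sup>2)" using ab by simp_all
  then show ?thesis unfolding nu xx perp_def
    by (simp add: inner_prod_def power2_eq_square algebra_simps)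
qed

lemma norm_perp: "norm (perp \<nu>) = norm \<nu>"
  by (simp add: perp_def norm_prod_def add.commute)

lemma inner_perp_self: "inner (perp \<nu>) \<nu> = 0"
  by (simp add: perp_def inner_prod_def)

lemma norm_le_rot: assumes "\<nu> \<in> sphere (0::pt) 1"
  shows "norm x \<le> \<bar>inner x (perp \<nu>)\<bar> + \<bar>inner x \<nu>\<bar>"
proof -
  have n: "norm \<nu> = 1" "norm (perp \<nu>) = 1" using assms norm_perp[of \<nu>] by auto
  have "norm x = norm (inner x (perp \<nu>) *\<^sub>R perp \<nu> + inner x \<nu> *\<^sub>R \<nu>)"
    using rot_decomp[OF assms, of x] by simp
  also have "\<dots> \<le> norm (inner x (perp \<nu>) *\<^sub>R perp \<nu>) + norm (inner x \<nu> *\<^sub>R \<nu>)" by (rule norm_triangle_ineq)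
  also have "\<dots> = \<bar>inner x (perp \<nu>)\<bar> + \<bar>inner x \<nu>\<bar>" using n by simp
  finally show ?thesis .
qed

lemma Sq_subset_cball: assumes "\<nu> \<in> sphere (0::pt) 1" shows "Sq \<nu> 1 \<subseteq> cball 0 1"
proof
  fix x assume "x \<in> Sq \<nu> 1"
  then have "\<bar>inner x (perp \<nu>)\<bar> < 1/2" "\<bar>inner x \<nu>\<bar> < 1/2" by (auto simp: Sq_def Rect_def)
  then show "x \<in> cball 0 1" using norm_le_rot[OF assms, of x] by simp
qed

lemma abs_inner_unit: assumes "\<nu> \<in> sphere (0::pt) 1" shows "\<bar>inner x \<nu>\<bar> \<le> norm x"
  using Cauchy_Schwarz_ineq2[of x \<nu>] assms by simp

lemma open_Rect: "open (Rect \<nu> l h)"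
proof -
  have "Rect \<nu> l h = {x. inner (perp \<nu>) x < l/2} \<inter> {x. inner (perp \<nu>) x > - (l/2)} \<inter> {x. inner \<nu> x < h/2} \<inter> {x. inner \<nu> x > - (h/2)}"
    unfolding Rect_def by (auto simp: inner_commute abs_less_iff)
  also have "open \<dots>"
    by (intro open_Int open_halfspace_lt open_halfspace_gt)
  finally show ?thesis .
qed

lemma bounded_Rect: assumes "\<nu> \<in> sphere (0::pt) 1" shows "bounded (Rect \<nu> l h)"
proof -
  have "Rect \<nu> l h \<subseteq> cball 0 (\<bar>l\<bar> + \<bar>h\<bar>)"
  proof
    fix x assume "x \<in> Rect \<nu> l h"
    then have "\<bar>inner x (perp \<nu>)\<bar> < l/2" "\<bar>inner x \<nu>\<bar> < h/2" by (auto simp: Rect_def)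
    then show "x \<in> cball 0 (\<bar>l\<bar> + \<bar>h\<bar>)" using norm_le_rot[OF assms, of x] by simp
  qed
  then show ?thesis using bounded_cball bounded_subset by blast
qed

section \<open>A competitor with bounded energy\<close>

definition sublattice_class :: "pt \<Rightarrow> int" where
  "sublattice_class y = (\<lfloor>inner dual1 y\<rfloor> - \<lfloor>inner dual2 y\<rfloor>) mod 3"

definition spin_dir :: "int \<Rightarrow> pt" where
  "spin_dir c = (if c = 0 then (1, 0) else if c = 1 then (- 1/2, sqrt 3 / 2) else (- 1/2, - sqrt 3 / 2))"

definition ground_spin :: "bool \<Rightarrow> int \<Rightarrow> pt" where
  "ground_spin b c = spin_dir (if b then c else (- c) mod 3)"

(* On each side of the interface a 120-degree ground state (zero energy on every triangle),
   with chirality 1 where inner y \<nu> \<ge> 0 and -1 elsewhere. *)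
definition competitor :: "pt \<Rightarrow> real \<Rightarrow> pt \<Rightarrow> pt" where
  "competitor \<nu> \<epsilon> y = ground_spin (inner y \<nu> \<ge> 0) (sublattice_class ((1 / \<epsilon>) *\<^sub>R y))"

lemma sublattice_class_lat_pt: "sublattice_class (lat_pt m n) = (m - n) mod 3"
  by (simp add: sublattice_class_def)

lemma norm_spin_dir: "norm (spin_dir c) = 1"
  by (simp add: spin_dir_def norm_prod_def power2_eq_square)

lemma competitor_SF: "competitor \<nu> \<epsilon> \<in> SF \<epsilon>"
  unfolding SF_def competitor_def ground_spin_def using norm_spin_dir by simp

lemma sublattice_class_Tri: assumes "(i,j,k) \<in> Tri" shows "sublattice_class i = 0" "sublattice_class j = 1" "sublattice_class k = 2"
  using assms unfolding Tri_def Lat1_eq Lat2_eq Lat3_eq by (auto simp: sublattice_class_lat_pt) presburger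

lemma ground_spin_sum: "ground_spin b 0 + ground_spin b 1 + ground_spin b 2 = 0"
  by (cases b) (simp_all add: ground_spin_def spin_dir_def zero_prod_def)

lemma ground_spin_chirality: "2 / (3 * sqrt 3) * (cross2 (ground_spin b 0) (ground_spin b 1) + cross2 (ground_spin b 1) (ground_spin b 2) + cross2 (ground_spin b 2) (ground_spin b 0))
   = (if b then 1 else -1)"
proof -
  have s: "sqrt 3 * sqrt 3 = (3::real)" by simp
  show ?thesis by (cases b) (simp_all add: ground_spin_def spin_dir_def cross2_def field_simps s)
qed

lemma competitor_one_sided: assumes e: "\<epsilon> > 0" and t: "(i,j,k) \<in> Tri"
  and side: "(inner (\<epsilon> *\<^sub>R i) \<nu> \<ge> 0 \<and> inner (\<epsilon> *\<^sub>R j) \<nu> \<ge> 0 \<and> inner (\<epsilon> *\<^sub>R k) \<nu> \<ge> 0) \<or>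
              (inner (\<epsilon> *\<^sub>R i) \<nu> < 0 \<and> inner (\<epsilon> *\<^sub>R j) \<nu> < 0 \<and> inner (\<epsilon> *\<^sub>R k) \<nu> < 0)"
  shows "Ftri \<epsilon> (competitor \<nu> \<epsilon>) (i,j,k) = 0"
    and "chiT \<epsilon> (competitor \<nu> \<epsilon>) (i,j,k) = (if inner (\<epsilon> *\<^sub>R i) \<nu> \<ge> 0 then 1 else -1)"
proof -
  have c: "sublattice_class i = 0" "sublattice_class j = 1" "sublattice_class k = 2" using sublattice_class_Tri[OF t] by auto
  have sc: "(1 / \<epsilon>) *\<^sub>R (\<epsilon> *\<^sub>R y) = y" for y :: pt using e by simp
  define b where "b = (inner (\<epsilon> *\<^sub>R i) \<nu> \<ge> 0)"
  have vals: "competitor \<nu> \<epsilon> (\<epsilon> *\<^sub>R i) = ground_spin b 0" "competitor \<nu> \<epsilon> (\<epsilon> *\<^sub>R j) = ground_spin b 1" "competitor \<nu> \<epsilon> (\<epsilon> *\<^sub>R k) = ground_spin b 2"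
    using side c unfolding competitor_def sc b_def by auto
  show "Ftri \<epsilon> (competitor \<nu> \<epsilon>) (i,j,k) = 0" unfolding Ftri_def using vals ground_spin_sum by simp
  show "chiT \<epsilon> (competitor \<nu> \<epsilon>) (i,j,k) = (if inner (\<epsilon> *\<^sub>R i) \<nu> \<ge> 0 then 1 else -1)"
    unfolding chiT_def using vals ground_spin_chirality[of b] b_def by simp
qed

lemma Ftri_le9: assumes "u \<in> SF \<epsilon>" "t \<in> Tri" "\<epsilon> \<ge> 0" shows "Ftri \<epsilon> u t \<le> 9 * \<epsilon>"
proof -
  obtain i j k where tt: "t = (i,j,k)" by (metis prod_cases3)
  have v: "i \<in> Lat" "j \<in> Lat" "k \<in> Lat" using Tri_verts_Lat assms(2) tt by auto
  have n: "norm (u (\<epsilon> *\<^sub>R i)) = 1" "norm (u (\<epsilon> *\<^sub>R j)) = 1" "norm (u (\<epsilon> *\<^sub>R k)) = 1"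
    using assms(1) v unfolding SF_def by auto
  have "norm (u (\<epsilon> *\<^sub>R i) + u (\<epsilon> *\<^sub>R j) + u (\<epsilon> *\<^sub>R k)) \<le> 3"
    using norm_triangle_ineq[of "u (\<epsilon> *\<^sub>R i) + u (\<epsilon> *\<^sub>R j)" "u (\<epsilon> *\<^sub>R k)"] norm_triangle_ineq[of "u (\<epsilon> *\<^sub>R i)" "u (\<epsilon> *\<^sub>R j)"] n
    by linarith
  then have "(norm (u (\<epsilon> *\<^sub>R i) + u (\<epsilon> *\<^sub>R j) + u (\<epsilon> *\<^sub>R k)))\<^sup>2 \<le> 3\<^sup>2"
    by (intro power_mono) auto
  then show ?thesis unfolding Ftri_def tt using assms(3) by (simp add: mult_left_mono mult.commute)
qed

lemma norm_diff_Tri_verts_le: assumes "(i,j,k) \<in> Tri" "a \<in> {i,j,k}" "b \<in> {i,j,k}" shows "norm (a - b) \<le> 1"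
  using assms unfolding Tri_def by (auto simp: dist_norm norm_minus_commute)

lemma straddling_tri_near_line: assumes nu: "\<nu> \<in> sphere (0::pt) 1" and e: "\<epsilon> > 0" and t: "(i,j,k) \<in> Tri"
  and ns: "\<not> ((inner (\<epsilon> *\<^sub>R i) \<nu> \<ge> 0 \<and> inner (\<epsilon> *\<^sub>R j) \<nu> \<ge> 0 \<and> inner (\<epsilon> *\<^sub>R k) \<nu> \<ge> 0) \<or>
              (inner (\<epsilon> *\<^sub>R i) \<nu> < 0 \<and> inner (\<epsilon> *\<^sub>R j) \<nu> < 0 \<and> inner (\<epsilon> *\<^sub>R k) \<nu> < 0))"
  and V: "V \<in> {i,j,k}"
  shows "\<bar>inner V \<nu>\<bar> \<le> 1"
proof -
  obtain y1 y2 where y: "y1 \<in> {i,j,k}" "y2 \<in> {i,j,k}" "inner y1 \<nu> \<ge> 0" "inner y2 \<nu> < 0"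
  proof -
    have "\<exists>y1\<in>{i,j,k}. inner (\<epsilon> *\<^sub>R y1) \<nu> \<ge> 0" "\<exists>y2\<in>{i,j,k}. inner (\<epsilon> *\<^sub>R y2) \<nu> < 0" using ns by auto
    then obtain y1 y2 where "y1\<in>{i,j,k}" "inner (\<epsilon> *\<^sub>R y1) \<nu> \<ge> 0" "y2\<in>{i,j,k}" "inner (\<epsilon> *\<^sub>R y2) \<nu> < 0" by blast
    moreover have "inner (\<epsilon> *\<^sub>R y) \<nu> = \<epsilon> * inner y \<nu>" for y by simp
    ultimately show thesis using that e by (metis zero_le_mult_iff mult_less_0_iff not_less order_less_irrefl)
  qed
  have d1: "\<bar>inner (V - y1) \<nu>\<bar> \<le> 1" using abs_inner_unit[OF nu, of "V - y1"] norm_diff_Tri_verts_le[OF t V y(1)] by simp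
  have d2: "\<bar>inner (V - y2) \<nu>\<bar> \<le> 1" using abs_inner_unit[OF nu, of "V - y2"] norm_diff_Tri_verts_le[OF t V y(2)] by simp
  show ?thesis using d1 d2 y(3,4) by (simp add: inner_diff_left)
qed

section \<open>Counting lattice points near a line\<close>

lemma card_near_line_fiber_le: fixes A B :: real and M :: int assumes B: "\<bar>B\<bar> \<ge> 1/2"
  shows "card {q \<in> {-M..M}. \<bar>m * A + q * B\<bar> \<le> 1} \<le> 5"
proof (cases "{q \<in> {-M..M}. \<bar>m * A + q * B\<bar> \<le> 1} = {}")
  case True then show ?thesis unfolding True by simp
next
  case False
  define F where "F = {q \<in> {-M..M}. \<bar>m * A + q * B\<bar> \<le> 1}"
  have fin: "finite F" unfolding F_def by (rule finite_subset[of _ "{-M..M}"]) auto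
  define q0 where "q0 = Min F"
  have q0: "q0 \<in> F" unfolding q0_def using fin False F_def by (intro Min_in) auto
  have "F \<subseteq> {q0..q0+4}"
  proof
    fix q assume q: "q \<in> F"
    have ge: "q0 \<le> q" unfolding q0_def using fin q by simp
    have "\<bar>(q - q0) * B\<bar> \<le> 2"
    proof -
      have "\<bar>m * A + q * B\<bar> \<le> 1" "\<bar>m * A + q0 * B\<bar> \<le> 1" using q q0 unfolding F_def by auto
      moreover have "(q - q0) * B = (m * A + q * B) - (m * A + q0 * B)" by (simp add: algebra_simps)
      ultimately show ?thesis by linarith
    qed
    then have h2: "\<bar>real_of_int (q - q0) * B\<bar> \<le> 2" by simp
    have "\<bar>real_of_int (q - q0)\<bar> * (1/2) \<le> \<bar>real_of_int (q - q0)\<bar> * \<bar>B\<bar>" using B by (intro mult_left_mono) auto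
    also have "\<dots> \<le> 2" using h2 by (simp add: abs_mult)
    finally have "real_of_int (q - q0) \<le> real_of_int 4" using abs_ge_self[of "real_of_int (q - q0)"] by simp
    then have "q - q0 \<le> 4" by (simp only: of_int_le_iff)
    then show "q \<in> {q0..q0+4}" using ge by simp
  qed
  then have "card F \<le> card {q0..q0+4}" by (intro card_mono) auto
  then show ?thesis unfolding F_def by simp
qed

lemma card_near_line_box_le: fixes A B :: real and M :: int assumes B: "\<bar>B\<bar> \<ge> 1/2" and M: "M \<ge> 0"
  shows "card {(m, q). m \<in> {-M..M} \<and> q \<in> {-M..M} \<and> \<bar>m * A + q * B\<bar> \<le> 1} \<le> (2 * nat M + 1) * 5"
proof -
  have eq: "{(m, q). m \<in> {-M..M} \<and> q \<in> {-M..M} \<and> \<bar>m * A + q * B\<bar> \<le> 1} = Sigma {-M..M} (\<lambda>m. {q \<in> {-M..M}. \<bar>m * A + q * B\<bar> \<le> 1})"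
    by auto
  have "card (Sigma {-M..M} (\<lambda>m. {q \<in> {-M..M}. \<bar>m * A + q * B\<bar> \<le> 1})) = (\<Sum>m\<in>{-M..M}. card {q \<in> {-M..M}. \<bar>m * A + q * B\<bar> \<le> 1})"
  proof -
    have "\<forall>m\<in>{-M..M}. finite {q \<in> {-M..M}. \<bar>m * A + q * B\<bar> \<le> 1}"
      by (auto intro: finite_subset[of _ "{-M..M}"])
    then show ?thesis by (intro card_SigmaI) auto
  qed
  also have "\<dots> \<le> (\<Sum>m\<in>{-M..M}. 5)" by (intro sum_mono card_near_line_fiber_le[OF B])
  also have "\<dots> = (2 * nat M + 1) * 5" using M by simp
  finally show ?thesis unfolding eq .
qed

lemma unit_vector_lattice_coeff_ge_half:
  fixes a b :: real assumes ab: "a\<^sup>2 + b\<^sup>2 = 1"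
  shows "\<bar>a\<bar> \<ge> 1/2 \<or> \<bar>a / 2 + b * sqrt 3 / 2\<bar> \<ge> 1/2"
proof (rule ccontr)
  assume "\<not> ?thesis"
  then have a: "\<bar>a\<bar> < 1/2" and c: "\<bar>a / 2 + b * sqrt 3 / 2\<bar> < 1/2" by auto
  have "\<bar>b * sqrt 3\<bar> < 3/2" using a c by linarith
  then have "\<bar>b * sqrt 3\<bar>\<^sup>2 < (3/2)\<^sup>2" by (intro power_strict_mono) auto
  then have "b\<^sup>2 < 3/4" by (simp add: power_mult_distrib power_divide)
  moreover have "\<bar>a\<bar>\<^sup>2 < (1/2)\<^sup>2" using a by (intro power_strict_mono) auto
  ultimately show False using ab by (simp add: power_divide)
qed

lemma card_lattice_near_line_le: fixes M :: int assumes nu: "\<nu> \<in> sphere (0::pt) 1" and M: "M \<ge> 0"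
  shows "card {(m, q). m \<in> {-M..M} \<and> q \<in> {-M..M} \<and> \<bar>inner (lat_pt m q) \<nu>\<bar> \<le> 1} \<le> (2 * nat M + 1) * 5"
proof -
  define A where "A = fst \<nu>"
  define B where "B = fst \<nu> / 2 + snd \<nu> * sqrt 3 / 2"
  have inn: "inner (lat_pt m q) \<nu> = m * A + q * B" for m q
    unfolding A_def B_def by (simp add: lat_pt_def inner_prod_def algebra_simps)
  have AB: "\<bar>A\<bar> \<ge> 1/2 \<or> \<bar>B\<bar> \<ge> 1/2"
    unfolding A_def B_def by (rule unit_vector_lattice_coeff_ge_half[OF unit_sq[OF nu]])
  show ?thesis
  proof (cases "\<bar>B\<bar> \<ge> 1/2")
    case True then show ?thesis using card_near_line_box_le[OF True M, of A] unfolding inn by simp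
  next
    case False
    then have A: "\<bar>A\<bar> \<ge> 1/2" using AB by simp
    have "{(m, q). m \<in> {-M..M} \<and> q \<in> {-M..M} \<and> \<bar>inner (lat_pt m q) \<nu>\<bar> \<le> 1} =
          prod.swap ` {(q, m). q \<in> {-M..M} \<and> m \<in> {-M..M} \<and> \<bar>q * B + m * A\<bar> \<le> 1}"
      unfolding inn by (auto simp: add.commute image_iff)
    then have "card {(m, q). m \<in> {-M..M} \<and> q \<in> {-M..M} \<and> \<bar>inner (lat_pt m q) \<nu>\<bar> \<le> 1} \<le>
        card {(q, m). q \<in> {-M..M} \<and> m \<in> {-M..M} \<and> \<bar>q * B + m * A\<bar> \<le> 1}"
    proof -
      assume eq: "{(m, q). m \<in> {-M..M} \<and> q \<in> {-M..M} \<and> \<bar>inner (lat_pt m q) \<nu>\<bar> \<le> 1} =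
          prod.swap ` {(q, m). q \<in> {-M..M} \<and> m \<in> {-M..M} \<and> \<bar>q * B + m * A\<bar> \<le> 1}"
      have fin: "finite {(q, m). q \<in> {-M..M} \<and> m \<in> {-M..M} \<and> \<bar>q * B + m * A\<bar> \<le> 1}"
        by (rule finite_subset[of _ "{-M..M} \<times> {-M..M}"]) auto
      show ?thesis unfolding eq by (rule card_image_le[OF fin])
    qed
    also have "\<dots> \<le> (2 * nat M + 1) * 5" by (rule card_near_line_box_le[OF A M])
    finally show ?thesis .
  qed
qed

lemma tri_set_near_vertex: assumes t: "(i,j,k) \<in> Tri" and x: "x \<in> tri_set \<epsilon> (i,j,k)" and e: "\<epsilon> > 0"
  and v: "v \<in> {i,j,k}"
  shows "norm (x - \<epsilon> *\<^sub>R v) \<le> \<epsilon>"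
proof -
  have "tri_set \<epsilon> (i,j,k) \<subseteq> cball (\<epsilon> *\<^sub>R v) \<epsilon>"
    unfolding tri_set_def prod.case
  proof (rule hull_minimal)
    show "convex (cball (\<epsilon> *\<^sub>R v) \<epsilon>)" by (rule convex_cball)
    have "norm (\<epsilon> *\<^sub>R v - \<epsilon> *\<^sub>R w) \<le> \<epsilon>" if "w \<in> {i,j,k}" for w
    proof -
      have "norm (\<epsilon> *\<^sub>R v - \<epsilon> *\<^sub>R w) = \<epsilon> * norm (v - w)" using e by (simp add: scaleR_diff_right[symmetric])
      also have "\<dots> \<le> \<epsilon> * 1" using norm_diff_Tri_verts_le[OF t v that] e by (intro mult_left_mono) auto
      finally show ?thesis by simp
    qed
    then show "{\<epsilon> *\<^sub>R i, \<epsilon> *\<^sub>R j, \<epsilon> *\<^sub>R k} \<subseteq> cball (\<epsilon> *\<^sub>R v) \<epsilon>" by (auto simp: dist_norm)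
  qed
  then show ?thesis using x by (auto simp: dist_norm norm_minus_commute)
qed

text \<open>Only triangles straddling the interface carry energy; their vertices lie within distance
  \<epsilon> of it, so the unit square contains O(1/\<epsilon>) of them, each of energy at most 9\<epsilon>.\<close>

lemma competitor_energy_support:
  assumes nu: "\<nu> \<in> sphere (0::pt) 1" and e: "\<epsilon> > 0"
    and t: "t \<in> TriIn \<epsilon> (Sq \<nu> 1)" and nz: "Ftri \<epsilon> (competitor \<nu> \<epsilon>) t \<noteq> 0"
  shows "t \<in> (\<lambda>((m, q), b). tri_at (m - 1) q b) ` ({(m, q). m \<in> {-\<lceil>2 / \<epsilon>\<rceil>..\<lceil>2 / \<epsilon>\<rceil>}
    \<and> q \<in> {-\<lceil>2 / \<epsilon>\<rceil>..\<lceil>2 / \<epsilon>\<rceil>} \<and> \<bar>inner (lat_pt m q) \<nu>\<bar> \<le> 1} \<times> UNIV)"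
proof -
  have tT: "t \<in> Tri" and tQ: "tri_set \<epsilon> t \<subseteq> Sq \<nu> 1" using t unfolding TriIn_def by auto
  obtain p q b where tb: "t = tri_at p q b" using tT Tri_iff_tri_at by auto
  obtain i j k where ijk: "t = (i,j,k)" by (metis prod_cases3)
  have vin: "lat_pt (p+1) q \<in> {i,j,k}"
    using tri_at_verts_eq[of p q b] unfolding tb[symmetric] ijk by (simp add: tri_at_verts_def)
  have ns: "\<not> ((inner (\<epsilon> *\<^sub>R i) \<nu> \<ge> 0 \<and> inner (\<epsilon> *\<^sub>R j) \<nu> \<ge> 0 \<and> inner (\<epsilon> *\<^sub>R k) \<nu> \<ge> 0) \<or>
            (inner (\<epsilon> *\<^sub>R i) \<nu> < 0 \<and> inner (\<epsilon> *\<^sub>R j) \<nu> < 0 \<and> inner (\<epsilon> *\<^sub>R k) \<nu> < 0))"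
    using competitor_one_sided(1)[OF e, of i j k \<nu>] nz tT ijk by auto
  have line: "\<bar>inner (lat_pt (p+1) q) \<nu>\<bar> \<le> 1" using straddling_tri_near_line[OF nu e _ ns vin] tT ijk by simp
  have "\<epsilon> *\<^sub>R lat_pt (p+1) q \<in> tri_set \<epsilon> t" unfolding tri_set_def ijk using vin by (auto intro: hull_inc)
  then have "norm (\<epsilon> *\<^sub>R lat_pt (p+1) q) \<le> 1" using tQ Sq_subset_cball[OF nu] by auto
  from abs_lat_coords_le[OF e this] line have "((p+1, q), b) \<in> {(m, q). m \<in> {-\<lceil>2 / \<epsilon>\<rceil>..\<lceil>2 / \<epsilon>\<rceil>}
      \<and> q \<in> {-\<lceil>2 / \<epsilon>\<rceil>..\<lceil>2 / \<epsilon>\<rceil>} \<and> \<bar>inner (lat_pt m q) \<nu>\<bar> \<le> 1} \<times> UNIV"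
    by auto
  moreover have "t = (\<lambda>((m, q), b). tri_at (m - 1) q b) ((p+1, q), b)" using tb by simp
  ultimately show ?thesis by blast
qed

lemma Fen_competitor_le: assumes nu: "\<nu> \<in> sphere (0::pt) 1" and e: "\<epsilon> > 0" "\<epsilon> \<le> 1"
  shows "Fen \<epsilon> (competitor \<nu> \<epsilon>) (Sq \<nu> 1) \<le> 630"
proof -
  let ?u = "competitor \<nu> \<epsilon>"
  let ?Q = "Sq \<nu> 1"
  define M where "M = \<lceil>2 / \<epsilon>\<rceil>"
  have "2 / \<epsilon> > 0" using e by simp
  then have M0: "M \<ge> 0" unfolding M_def zero_le_ceiling by linarith
  define Box where "Box = {(m, q). m \<in> {-M..M} \<and> q \<in> {-M..M} \<and> \<bar>inner (lat_pt m q) \<nu>\<bar> \<le> 1}"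
  have finT: "finite (TriIn \<epsilon> ?Q)" using finite_TriIn[OF e(1) Sq_subset_cball[OF nu]] .
  define St where "St = {t \<in> TriIn \<epsilon> ?Q. Ftri \<epsilon> ?u t \<noteq> 0}"
  have St_sub: "St \<subseteq> (\<lambda>((m, q), b). tri_at (m - 1) q b) ` (Box \<times> UNIV)"
    using competitor_energy_support[OF nu e(1)] unfolding St_def Box_def M_def by blast
  have finBox: "finite Box" unfolding Box_def by (rule finite_subset[of _ "{-M..M} \<times> {-M..M}"]) auto
  have cB: "card Box \<le> (2 * nat M + 1) * 5" unfolding Box_def by (rule card_lattice_near_line_le[OF nu M0])
  have finBU: "finite (Box \<times> (UNIV :: bool set))" using finBox by simp
  have "card St \<le> card ((\<lambda>((m, q), b). tri_at (m - 1) q b) ` (Box \<times> (UNIV :: bool set)))"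
    by (rule card_mono[OF finite_imageI[OF finBU] St_sub])
  also have "\<dots> \<le> card (Box \<times> (UNIV :: bool set))" by (rule card_image_le[OF finBU])
  also have "\<dots> = 2 * card Box" by (simp add: card_cartesian_product)
  finally have cS: "card St \<le> 2 * ((2 * nat M + 1) * 5)" using cB by linarith
  have "Fen \<epsilon> ?u ?Q = sum (Ftri \<epsilon> ?u) St"
    unfolding Fen_def St_def using finT by (intro sum.mono_neutral_right) auto
  also have "\<dots> \<le> sum (\<lambda>_. 9 * \<epsilon>) St"
    using Ftri_le9[OF competitor_SF] e unfolding St_def TriIn_def by (intro sum_mono) auto
  also have "\<dots> = real (card St) * (9 * \<epsilon>)" by simp
  also have "\<dots> \<le> real (2 * ((2 * nat M + 1) * 5)) * (9 * \<epsilon>)"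
    using cS e by (intro mult_right_mono) auto
  also have "\<dots> = 90 * \<epsilon> * (2 * real_of_int M + 1)"
  proof -
    have "real (nat M) = real_of_int M" using M0 by simp
    then show ?thesis by (simp add: algebra_simps)
  qed
  also have "\<dots> \<le> 90 * \<epsilon> * (2 * (2 / \<epsilon> + 1) + 1)"
  proof -
    have "real_of_int M \<le> 2 / \<epsilon> + 1" unfolding M_def by (rule of_int_ceiling_le_add_one)
    then show ?thesis using e by (intro mult_left_mono) auto
  qed
  also have "\<dots> = 360 + 270 * \<epsilon>" using e by (simp add: field_simps)
  also have "\<dots> \<le> 630" using e by simp
  finally show ?thesis .
qed

definition off_tri_edges :: "real \<Rightarrow> pt \<Rightarrow> bool" where
  "off_tri_edges \<epsilon> x \<longleftrightarrow> inner dual1 x / \<epsilon> \<notin> \<int> \<and> inner dual2 x / \<epsilon> \<notin> \<int> \<and> inner dual1 x / \<epsilon> + inner dual2 x / \<epsilon> \<notin> \<int>"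

lemma AE_off_tri_edges: assumes e: "\<epsilon> > 0" shows "AE x in lborel. off_tri_edges \<epsilon> x"
proof -
  have h: "AE x in lborel. inner a x \<noteq> b" if "a \<noteq> 0" for a :: pt and b
    using AE_not_in[OF hyperplane_null_sets[OF that, of b]] by simp
  have "AE x in lborel. \<forall>z::int. inner dual1 x \<noteq> \<epsilon> * z \<and> inner dual2 x \<noteq> \<epsilon> * z \<and> inner (dual1 + dual2) x \<noteq> \<epsilon> * z"
    unfolding AE_all_countable using h[OF dual1_nonzero] h[OF dual2_nonzero] h[OF dual12_nonzero] by auto
  then show ?thesis
  proof (rule AE_mp, intro AE_I2 impI)
    fix x assume H: "\<forall>z::int. inner dual1 x \<noteq> \<epsilon> * z \<and> inner dual2 x \<noteq> \<epsilon> * z \<and> inner (dual1 + dual2) x \<noteq> \<epsilon> * z"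
    have "inner dual1 x / \<epsilon> \<notin> \<int>"
    proof
      assume "inner dual1 x / \<epsilon> \<in> \<int>" then obtain z where "inner dual1 x / \<epsilon> = of_int z" by (auto elim: Ints_cases)
      then have "inner dual1 x = \<epsilon> * z" using e by (simp add: field_simps)
      then show False using H by blast
    qed
    moreover have "inner dual2 x / \<epsilon> \<notin> \<int>"
    proof
      assume "inner dual2 x / \<epsilon> \<in> \<int>" then obtain z where "inner dual2 x / \<epsilon> = of_int z" by (auto elim: Ints_cases)
      then have "inner dual2 x = \<epsilon> * z" using e by (simp add: field_simps)
      then show False using H by blast
    qed
    moreover have "inner dual1 x / \<epsilon> + inner dual2 x / \<epsilon> \<notin> \<int>"
    proof
      assume "inner dual1 x / \<epsilon> + inner dual2 x / \<epsilon> \<in> \<int>" then obtain z where "inner dual1 x / \<epsilon> + inner dual2 x / \<epsilon> = of_int z" by (auto elim: Ints_cases)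
      then have "inner (dual1 + dual2) x = \<epsilon> * z" using e by (simp add: field_simps inner_add_left)
      then show False using H by blast
    qed
    ultimately show "off_tri_edges \<epsilon> x" unfolding off_tri_edges_def by blast
  qed
qed

lemma chi_competitor_off_interface: assumes nu: "\<nu> \<in> sphere (0::pt) 1" and e: "\<epsilon> > 0" and g: "off_tri_edges \<epsilon> x"
  and small: "\<epsilon> < \<bar>inner x \<nu>\<bar>"
  shows "chi \<epsilon> (competitor \<nu> \<epsilon>) x = chinu \<nu> x"
proof -
  define t where "t = tri_containing \<epsilon> x"
  have tT: "t \<in> Tri" unfolding t_def tri_containing_def by (rule tri_at_Tri)
  have xi: "x \<in> interior (tri_set \<epsilon> t)" unfolding t_def using interior_tri_containing[OF e] g unfolding off_tri_edges_def by blast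
  obtain i j k where ijk: "t = (i,j,k)" by (metis prod_cases3)
  have xt: "x \<in> tri_set \<epsilon> (i,j,k)" using xi interior_subset ijk by blast
  have near: "\<bar>inner (\<epsilon> *\<^sub>R v) \<nu> - inner x \<nu>\<bar> < \<bar>inner x \<nu>\<bar>" if "v \<in> {i,j,k}" for v
  proof -
    have "\<bar>inner (\<epsilon> *\<^sub>R v) \<nu> - inner x \<nu>\<bar> = \<bar>inner (x - \<epsilon> *\<^sub>R v) \<nu>\<bar>" by (simp add: inner_diff_left)
    also have "\<dots> \<le> norm (x - \<epsilon> *\<^sub>R v)" by (rule abs_inner_unit[OF nu])
    also have "\<dots> \<le> \<epsilon>" using tri_set_near_vertex[OF _ xt e that] tT ijk by simp
    finally show ?thesis using small by linarith
  qed
  have chi: "chi \<epsilon> (competitor \<nu> \<epsilon>) x = chiT \<epsilon> (competitor \<nu> \<epsilon>) (i,j,k)" using chi_on_interior[OF e tT xi] ijk by simp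
  show ?thesis
  proof (cases "inner x \<nu> > 0")
    case True
    have p: "inner (\<epsilon> *\<^sub>R v) \<nu> > 0" if "v \<in> {i,j,k}" for v using near[OF that] True by linarith
    have pos: "inner (\<epsilon> *\<^sub>R i) \<nu> \<ge> 0" "inner (\<epsilon> *\<^sub>R j) \<nu> \<ge> 0" "inner (\<epsilon> *\<^sub>R k) \<nu> \<ge> 0"
      using p[of i] p[of j] p[of k] by (simp_all only: insert_iff simp_thms less_imp_le)
    have "chiT \<epsilon> (competitor \<nu> \<epsilon>) (i,j,k) = 1" using competitor_one_sided(2)[OF e, of i j k \<nu>] tT ijk pos by simp
    then show ?thesis using chi True by (simp add: chinu_def)
  next
    case False
    then have neg: "inner x \<nu> < 0" using small e by (auto simp: abs_if split: if_splits)
    have p: "inner (\<epsilon> *\<^sub>R v) \<nu> < 0" if "v \<in> {i,j,k}" for v using near[OF that] neg by linarith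
    have n3: "inner (\<epsilon> *\<^sub>R i) \<nu> < 0" "inner (\<epsilon> *\<^sub>R j) \<nu> < 0" "inner (\<epsilon> *\<^sub>R k) \<nu> < 0"
      using p[of i] p[of j] p[of k] by (simp_all only: insert_iff simp_thms)
    have "chiT \<epsilon> (competitor \<nu> \<epsilon>) (i,j,k) = -1" using competitor_one_sided(2)[OF e, of i j k \<nu>] tT ijk n3 by simp
    then show ?thesis using chi neg by (simp add: chinu_def)
  qed
qed

definition eps_inv_Suc :: "nat \<Rightarrow> real" where "eps_inv_Suc n = inverse (real (Suc n))"

lemma eps_inv_Suc_pos: "eps_inv_Suc n > 0" by (simp add: eps_inv_Suc_def)
lemma eps_inv_Suc_le_1: "eps_inv_Suc n \<le> 1" by (simp add: eps_inv_Suc_def inverse_le_1_iff)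
lemma eps_inv_Suc_tendsto_0: "eps_inv_Suc \<longlonglongrightarrow> 0" unfolding eps_inv_Suc_def by (rule LIMSEQ_inverse_real_of_nat)

lemma competitor_L1dist_tendsto_0: assumes nu: "\<nu> \<in> sphere (0::pt) 1"
  shows "(\<lambda>n. L1dist (Sq \<nu> 1) (chi (eps_inv_Suc n) (competitor \<nu> (eps_inv_Suc n))) (chinu \<nu>)) \<longlonglongrightarrow> 0"
  unfolding L1dist_def
proof (rule set_integral_bounded_tendsto_0[where C = 3])
  show "Sq \<nu> 1 \<in> sets borel" "bounded (Sq \<nu> 1)" using open_Rect bounded_Rect[OF nu] unfolding Sq_def by auto
  show "(\<lambda>x. \<bar>chi (eps_inv_Suc n) (competitor \<nu> (eps_inv_Suc n)) x - chinu \<nu> x\<bar>) \<in> borel_measurable borel" for n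
    by (rule chi_chinu_diff_measurable[OF eps_inv_Suc_pos])
  show "\<bar>\<bar>chi (eps_inv_Suc n) (competitor \<nu> (eps_inv_Suc n)) x - chinu \<nu> x\<bar>\<bar> \<le> 3" for n x
    using abs_chi_le_2[OF competitor_SF, of "eps_inv_Suc n" \<nu> x] abs_chinu_le_1[of \<nu> x] by linarith
  have pw: "(\<lambda>n. \<bar>chi (eps_inv_Suc n) (competitor \<nu> (eps_inv_Suc n)) x - chinu \<nu> x\<bar>) \<longlonglongrightarrow> 0"
    if x: "inner \<nu> x \<noteq> 0" and gx: "\<forall>n. off_tri_edges (eps_inv_Suc n) x" for x
  proof -
    have "\<bar>inner x \<nu>\<bar> > 0" using x by (simp add: inner_commute)
    from order_tendstoD(2)[OF eps_inv_Suc_tendsto_0 this]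
    have "eventually (\<lambda>n. chi (eps_inv_Suc n) (competitor \<nu> (eps_inv_Suc n)) x = chinu \<nu> x) sequentially"
      by eventually_elim (rule chi_competitor_off_interface[OF nu eps_inv_Suc_pos gx[rule_format]])
    then show ?thesis by (rule tendsto_eventually[OF eventually_mono]) simp
  qed
  have "AE x in lborel. x \<notin> {x. inner \<nu> x = 0}"
    using nu by (intro AE_not_in hyperplane_null_sets) auto
  moreover have "AE x in lborel. \<forall>n. off_tri_edges (eps_inv_Suc n) x"
    unfolding AE_all_countable using AE_off_tri_edges[OF eps_inv_Suc_pos] by blast
  ultimately show "AE x in lborel. (\<lambda>n. \<bar>chi (eps_inv_Suc n) (competitor \<nu> (eps_inv_Suc n)) x - chinu \<nu> x\<bar>)
      \<longlonglongrightarrow> 0"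
    by eventually_elim (use pw in auto)
qed

lemma psi_le_liminf: assumes "\<forall>n. eps' n > 0" "eps' \<longlonglongrightarrow> 0" "\<forall>n. v n \<in> SF (eps' n)"
  "(\<lambda>n. L1dist (Rect \<nu> 1 1) (chi (eps' n) (v n)) (chinu \<nu>)) \<longlonglongrightarrow> 0"
  shows "psi 1 1 \<nu> \<le> liminf (\<lambda>n. ereal (Fen (eps' n) (v n) (Rect \<nu> 1 1)))"
proof -
  have "psi 1 1 \<nu> = Inf {liminf (\<lambda>n. ereal (Fen (eps n) (u n) (Rect \<nu> 1 1))) | eps u.
        (\<forall>n. eps n > 0) \<and> eps \<longlonglongrightarrow> 0 \<and> (\<forall>n. u n \<in> SF (eps n)) \<and>
        (\<lambda>n. L1dist (Rect \<nu> 1 1) (chi (eps n) (u n)) (chinu \<nu>)) \<longlonglongrightarrow> 0}"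
    unfolding psi_def by (simp add: one_ereal_def[symmetric])
  also have "\<dots> \<le> liminf (\<lambda>n. ereal (Fen (eps' n) (v n) (Rect \<nu> 1 1)))"
    by (rule Inf_lower) (use assms in blast)
  finally show ?thesis .
qed

lemma psi_le_630: assumes nu: "\<nu> \<in> sphere (0::pt) 1" shows "psi 1 1 \<nu> \<le> 630"
proof -
  have "psi 1 1 \<nu> \<le> liminf (\<lambda>n. ereal (Fen (eps_inv_Suc n) (competitor \<nu> (eps_inv_Suc n)) (Rect \<nu> 1 1)))"
    by (rule psi_le_liminf) (use eps_inv_Suc_pos eps_inv_Suc_tendsto_0 competitor_SF competitor_L1dist_tendsto_0[OF nu] in \<open>auto simp: Sq_def\<close>)
  also have "\<dots> \<le> liminf (\<lambda>n. ereal 630)"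
    by (rule Liminf_mono) (use Fen_competitor_le[OF nu eps_inv_Suc_pos eps_inv_Suc_le_1] in \<open>auto simp: Sq_def\<close>)
  also have "\<dots> = 630" by (simp add: Liminf_const)
  finally show ?thesis .
qed

section \<open>Copies of the problem inside the band\<close>

lemma norm_lat_coords_le: "norm ((\<alpha> + \<beta> / 2, \<beta> * sqrt 3 / 2) :: pt) \<le> \<bar>\<alpha>\<bar> + \<bar>\<beta>\<bar>"
proof -
  have eq: "((\<alpha> + \<beta> / 2, \<beta> * sqrt 3 / 2) :: pt) = \<alpha> *\<^sub>R (1, 0) + \<beta> *\<^sub>R (1/2, sqrt 3 / 2)" by simp
  have n1: "norm ((1, 0) :: pt) = 1" by (simp add: norm_Pair)
  have n2: "norm ((1/2, sqrt 3 / 2) :: pt) = 1" by (simp add: norm_Pair power2_eq_square)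
  have "norm ((\<alpha> + \<beta> / 2, \<beta> * sqrt 3 / 2) :: pt) \<le> norm (\<alpha> *\<^sub>R ((1, 0)::pt)) + norm (\<beta> *\<^sub>R ((1/2, sqrt 3 / 2)::pt))"
    unfolding eq by (rule norm_triangle_ineq)
  also have "\<dots> = \<bar>\<alpha>\<bar> + \<bar>\<beta>\<bar>" by (simp only: norm_scaleR n1 n2 mult_1_right)
  finally show ?thesis .
qed

lemma Lat1_approx: assumes e: "\<epsilon> > 0" shows "\<exists>w\<in>Lat1. norm (\<epsilon> *\<^sub>R w - z) \<le> 4 * \<epsilon>"
proof -
  define y where "y = (1 / \<epsilon>) *\<^sub>R z"
  obtain a b where yab: "y = (a + b/2, b * sqrt 3 / 2)" "inner dual1 y = a" "inner dual2 y = b" by (rule pt_lat_coords)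
  define m0 where "m0 = \<lfloor>a\<rfloor>"
  define n0 where "n0 = \<lfloor>b\<rfloor>"
  define d where "d = (m0 - n0) mod 3"
  have d: "0 \<le> d" "d \<le> 2" unfolding d_def by simp_all
  define w where "w = lat_pt (m0 - d) n0"
  have wL: "w \<in> Lat1" unfolding w_def Lat1_eq d_def by auto presburger
  have "y - w = ((a - (m0 - d)) + (b - n0) / 2, (b - n0) * sqrt 3 / 2)"
    unfolding yab(1) w_def lat_pt_def by (simp add: algebra_simps add_divide_distrib diff_divide_distrib)
  then have "norm (y - w) \<le> \<bar>a - (m0 - d)\<bar> + \<bar>b - n0\<bar>" using norm_lat_coords_le by metis
  also have "\<dots> \<le> 4" using d unfolding m0_def n0_def by linarith
  finally have n4: "norm (w - y) \<le> 4" by (simp add: norm_minus_commute)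
  have "\<epsilon> *\<^sub>R w - z = \<epsilon> *\<^sub>R (w - y)" unfolding y_def using e by (simp add: algebra_simps)
  then have "norm (\<epsilon> *\<^sub>R w - z) = \<epsilon> * norm (w - y)" using e by simp
  also have "\<dots> \<le> \<epsilon> * 4" using n4 e by (intro mult_left_mono) auto
  finally show ?thesis using wL by (auto simp: mult.commute)
qed

lemma inner_perp_perp: assumes "\<nu> \<in> sphere (0::pt) 1" shows "inner (perp \<nu>) (perp \<nu>) = 1"
proof -
  have "norm (perp \<nu>) = 1" using assms norm_perp by simp
  then show ?thesis by (simp add: norm_eq_sqrt_inner)
qed

definition band_cell :: "pt \<Rightarrow> nat \<Rightarrow> nat \<Rightarrow> pt set" where
  "band_cell \<nu> N k = {x. -1/2 + real k / N < inner x (perp \<nu>)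
     \<and> inner x (perp \<nu>) < -1/2 + (real k + 1) / N \<and> \<bar>inner x \<nu>\<bar> < 1 / (2 * real N)}"

lemma band_cell_subset:
  assumes k: "k < N" and N\<delta>: "1 / N \<le> \<delta>"
  shows "band_cell \<nu> N k \<subseteq> Sq \<nu> 1 \<inter> Rect \<nu> 1 \<delta>"
proof
  fix x assume "x \<in> band_cell \<nu> N k"
  then have h: "-1/2 + real k / N < inner x (perp \<nu>)" "inner x (perp \<nu>) < -1/2 + (real k + 1) / N"
    "\<bar>inner x \<nu>\<bar> < 1 / (2 * real N)" by (auto simp: band_cell_def)
  have N: "real N \<ge> 1" using k by simp
  have "real k / N \<ge> 0" "(real k + 1) / N \<le> 1" "1 / (2 * real N) \<le> 1/2" "1 / (2 * real N) \<le> \<delta> / 2"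
    using k N N\<delta> by (auto simp: field_simps)
  with h have "\<bar>inner x (perp \<nu>)\<bar> < 1/2" "\<bar>inner x \<nu>\<bar> < 1/2" "\<bar>inner x \<nu>\<bar> < \<delta>/2"
    by linarith+
  then show "x \<in> Sq \<nu> 1 \<inter> Rect \<nu> 1 \<delta>" by (simp add: Sq_def Rect_def)
qed

lemma band_cells_disjoint: "k \<noteq> l \<Longrightarrow> band_cell \<nu> N k \<inter> band_cell \<nu> N l = {}"
proof (induction k l rule: linorder_wlog)
  case (le k l)
  then have "(real k + 1) / N \<le> real l / N" by (simp add: divide_right_mono)
  then show ?case by (auto simp: band_cell_def)
qed (simp add: Int_commute)

lemma copy_subset_band_cell:
  fixes k N :: nat
  assumes nu: "\<nu> \<in> sphere (0::pt) 1" and k: "k < N" and s: "s > 0"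
    and c: "norm (c - (-1/2 + (real k + 1/2) / N) *\<^sub>R perp \<nu>) \<le> \<rho>"
    and small: "s / 2 + \<rho> < 1 / (2 * real N)"
  shows "aff c s ` Sq \<nu> 1 \<subseteq> band_cell \<nu> N k"
proof
  fix x assume "x \<in> aff c s ` Sq \<nu> 1"
  then obtain y where y: "y \<in> Sq \<nu> 1" and xy: "x = c + s *\<^sub>R y" unfolding aff_def by auto
  define z where "z = (-1/2 + (real k + 1/2) / N) *\<^sub>R perp \<nu>"
  have y1: "\<bar>s * inner y (perp \<nu>)\<bar> < s / 2" "\<bar>s * inner y \<nu>\<bar> < s / 2"
    using y s by (auto simp: Sq_def Rect_def abs_mult)
  have zp: "inner z (perp \<nu>) = -1/2 + (real k + 1/2) / N" unfolding z_def using inner_perp_perp[OF nu] by simp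
  have zn: "inner z \<nu> = 0" unfolding z_def using inner_perp_self by simp
  have c1: "\<bar>inner (c - z) (perp \<nu>)\<bar> \<le> \<rho>"
    using Cauchy_Schwarz_ineq2[of "c - z" "perp \<nu>"] nu norm_perp[of \<nu>] c unfolding z_def by simp
  have c2: "\<bar>inner (c - z) \<nu>\<bar> \<le> \<rho>"
    using abs_inner_unit[OF nu, of "c - z"] c unfolding z_def by simp
  have ex1: "inner x (perp \<nu>) = inner (c - z) (perp \<nu>) + inner z (perp \<nu>) + s * inner y (perp \<nu>)"
    unfolding xy by (simp add: inner_diff_left inner_add_left)
  have ex2: "inner x \<nu> = inner (c - z) \<nu> + s * inner y \<nu>"
    unfolding xy using zn by (simp add: inner_diff_left inner_add_left)
  have "real N > 0" using k by simp
  then have h: "(real k + 1/2) / N - 1 / (2 * real N) = real k / N"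
    "(real k + 1/2) / N + 1 / (2 * real N) = (real k + 1) / N"
    by (simp_all add: field_simps)
  have "-1/2 + real k / N < inner x (perp \<nu>)" using ex1 zp c1 y1 small h(1) by linarith
  moreover have "inner x (perp \<nu>) < -1/2 + (real k + 1) / N" using ex1 zp c1 y1 small h(2) by linarith
  moreover have "\<bar>inner x \<nu>\<bar> < 1 / (2 * real N)" using ex2 c2 y1 small by linarith
  ultimately show "x \<in> band_cell \<nu> N k" unfolding band_cell_def by blast
qed

lemma integrable_bounded_indicator: fixes f :: "pt \<Rightarrow> real" assumes f: "f \<in> borel_measurable borel" and B: "\<And>x. \<bar>f x\<bar> \<le> B"
  and A: "A \<in> sets borel" "bounded A"
  shows "integrable lborel (\<lambda>x. indicator A x *\<^sub>R f x)"
proof (rule integrableI_bounded_set[where A=A and B=B])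
  show "A \<in> sets lborel" using A by simp
  show "(\<lambda>x. indicator A x *\<^sub>R f x) \<in> borel_measurable lborel" using f A by measurable
  show "emeasure lborel A < \<infinity>" using emeasure_bounded_finite[OF A(2)] .
  show "AE x in lborel. x \<in> A \<longrightarrow> norm (indicator A x *\<^sub>R f x) \<le> B" using B by (auto simp: indicator_def)
  show "AE x in lborel. x \<notin> A \<longrightarrow> indicator A x *\<^sub>R f x = 0" by auto
qed

lemma L1dist_copy_le: assumes nu: "\<nu> \<in> sphere (0::pt) 1" and s: "s > 0" and e: "\<epsilon> > 0" and u: "u \<in> SF \<epsilon>"
  shows "L1dist (Sq \<nu> 1) (\<lambda>x. chi \<epsilon> u (aff c s x)) (chinu \<nu>) \<le>
     L1dist (aff c s ` Sq \<nu> 1) (chi \<epsilon> u) (chinu \<nu>) / s\<^sup>2 + (LINT x:Sq \<nu> 1|lborel. \<bar>chinu \<nu> (aff c s x) - chinu \<nu> x\<bar>)"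
proof -
  let ?Q = "Sq \<nu> 1"
  have oQ: "open ?Q" unfolding Sq_def by (rule open_Rect)
  have Qb: "?Q \<in> sets borel" "bounded ?Q" using oQ bounded_Rect[OF nu] unfolding Sq_def by auto
  have am[measurable]: "aff c s \<in> borel_measurable borel" unfolding aff_def by measurable
  have hm: "(\<lambda>y. \<bar>chi \<epsilon> u y - chinu \<nu> y\<bar>) \<in> borel_measurable borel" by (rule chi_chinu_diff_measurable[OF e])
  have f1m: "(\<lambda>x. \<bar>chi \<epsilon> u (aff c s x) - chinu \<nu> (aff c s x)\<bar>) \<in> borel_measurable borel"
    using measurable_comp[OF am hm] by (simp add: comp_def)
  have f2m: "(\<lambda>x. \<bar>chinu \<nu> (aff c s x) - chinu \<nu> x\<bar>) \<in> borel_measurable borel"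
    using chinu_borel_measurable[of \<nu>] by measurable
  have f0m: "(\<lambda>x. \<bar>chi \<epsilon> u (aff c s x) - chinu \<nu> x\<bar>) \<in> borel_measurable borel"
    using measurable_comp[OF am chi_borel_measurable[OF e, of u]] chinu_borel_measurable[of \<nu>] by (simp add: comp_def) measurable
  have b1: "\<bar>\<bar>chi \<epsilon> u (aff c s x) - chinu \<nu> (aff c s x)\<bar>\<bar> \<le> 3" for x
    using abs_chi_le_2[OF u, of "aff c s x"] abs_chinu_le_1[of \<nu> "aff c s x"] by linarith
  have b2: "\<bar>\<bar>chinu \<nu> (aff c s x) - chinu \<nu> x\<bar>\<bar> \<le> 2" for x
    using abs_chinu_le_1[of \<nu> "aff c s x"] abs_chinu_le_1[of \<nu> x] by linarith
  have b0: "\<bar>\<bar>chi \<epsilon> u (aff c s x) - chinu \<nu> x\<bar>\<bar> \<le> 3" for x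
    using abs_chi_le_2[OF u, of "aff c s x"] abs_chinu_le_1[of \<nu> x] by linarith
  note i1 = integrable_bounded_indicator[OF f1m b1 Qb] and i2 = integrable_bounded_indicator[OF f2m b2 Qb] and i0 = integrable_bounded_indicator[OF f0m b0 Qb]
  have "L1dist ?Q (\<lambda>x. chi \<epsilon> u (aff c s x)) (chinu \<nu>) \<le>
        (LINT x:?Q|lborel. \<bar>chi \<epsilon> u (aff c s x) - chinu \<nu> (aff c s x)\<bar>) + (LINT x:?Q|lborel. \<bar>chinu \<nu> (aff c s x) - chinu \<nu> x\<bar>)"
    unfolding L1dist_def set_lebesgue_integral_def
  proof -
    have "integral\<^sup>L lborel (\<lambda>x. indicator ?Q x *\<^sub>R \<bar>chi \<epsilon> u (aff c s x) - chinu \<nu> x\<bar>) \<le>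
          integral\<^sup>L lborel (\<lambda>x. indicator ?Q x *\<^sub>R \<bar>chi \<epsilon> u (aff c s x) - chinu \<nu> (aff c s x)\<bar> + indicator ?Q x *\<^sub>R \<bar>chinu \<nu> (aff c s x) - chinu \<nu> x\<bar>)"
      by (rule Bochner_Integration.integral_mono[OF i0 Bochner_Integration.integrable_add[OF i1 i2]])
         (auto simp: indicator_def)
    also have "\<dots> = integral\<^sup>L lborel (\<lambda>x. indicator ?Q x *\<^sub>R \<bar>chi \<epsilon> u (aff c s x) - chinu \<nu> (aff c s x)\<bar>) + integral\<^sup>L lborel (\<lambda>x. indicator ?Q x *\<^sub>R \<bar>chinu \<nu> (aff c s x) - chinu \<nu> x\<bar>)"
      by (rule Bochner_Integration.integral_add[OF i1 i2])
    finally show "integral\<^sup>L lborel (\<lambda>x. indicator ?Q x *\<^sub>R \<bar>chi \<epsilon> u (aff c s x) - chinu \<nu> x\<bar>) \<le> integral\<^sup>L lborel (\<lambda>x. indicator ?Q x *\<^sub>R \<bar>chi \<epsilon> u (aff c s x) - chinu \<nu> (aff c s x)\<bar>) + integral\<^sup>L lborel (\<lambda>x. indicator ?Q x *\<^sub>R \<bar>chinu \<nu> (aff c s x) - chinu \<nu> x\<bar>)" .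
  qed
  also have "(LINT x:?Q|lborel. \<bar>chi \<epsilon> u (aff c s x) - chinu \<nu> (aff c s x)\<bar>) = L1dist (aff c s ` ?Q) (chi \<epsilon> u) (chinu \<nu>) / s\<^sup>2"
    unfolding L1dist_def using set_integral_aff[OF s oQ hm, of c] by simp
  finally show ?thesis .
qed

lemma L1dist_mono: assumes e: "\<epsilon> > 0" and u: "u \<in> SF \<epsilon>" and Q: "Q \<in> sets borel" "bounded Q"
  and C: "C \<in> sets borel" "C \<subseteq> Q"
  shows "L1dist C (chi \<epsilon> u) (chinu \<nu>) \<le> L1dist Q (chi \<epsilon> u) (chinu \<nu>)"
  using sum_L1dist_disjoint_le[OF e u Q, of "{0::nat}" "\<lambda>_. C"] C by simp

lemma copy_L1dist_tendsto_0:
  assumes nu: "\<nu> \<in> sphere (0::pt) 1" and ep: "\<forall>n. eps n > 0" and el: "eps \<longlonglongrightarrow> 0"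
    and uS: "\<forall>n. u n \<in> SF (eps n)"
    and L1: "(\<lambda>n. L1dist (Sq \<nu> 1) (chi (eps n) (u n)) (chinu \<nu>)) \<longlonglongrightarrow> 0"
    and s: "s > 0" and W: "\<forall>n. W n \<in> Lat1" and cz: "\<forall>n. norm (eps n *\<^sub>R W n - z) \<le> 4 * eps n"
    and zn: "inner z \<nu> = 0"
    and sub: "eventually (\<lambda>n. aff (eps n *\<^sub>R W n) s ` Sq \<nu> 1 \<subseteq> Sq \<nu> 1) sequentially"
  shows "(\<lambda>n. L1dist (Sq \<nu> 1) (chi (eps n / s) (\<lambda>x. u n (aff (eps n *\<^sub>R W n) s x))) (chinu \<nu>)) \<longlonglongrightarrow> 0"
proof -
  let ?Q = "Sq \<nu> 1"
  define c where "c n = eps n *\<^sub>R W n" for n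
  have oQ: "open ?Q" unfolding Sq_def by (rule open_Rect)
  have Qb: "?Q \<in> sets borel" "bounded ?Q" using oQ bounded_Rect[OF nu] unfolding Sq_def by auto
  have nu0: "\<nu> \<noteq> 0" using nu by auto
  have eqc: "L1dist ?Q (chi (eps n / s) (\<lambda>x. u n (aff (c n) s x))) (chinu \<nu>) = L1dist ?Q (\<lambda>x. chi (eps n) (u n) (aff (c n) s x)) (chinu \<nu>)" for n
    unfolding L1dist_def c_def using chi_shift[OF s W[rule_format] ep[rule_format]] by simp
  have cl: "(\<lambda>n. inner (c n) \<nu>) \<longlonglongrightarrow> 0"
  proof (rule Lim_null_comparison[OF always_eventually])
    show "\<forall>n. norm (inner (c n) \<nu>) \<le> 4 * eps n"
    proof
      fix n
      have "inner (c n) \<nu> = inner (c n - z) \<nu>" using zn by (simp add: inner_diff_left)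
      then have "\<bar>inner (c n) \<nu>\<bar> \<le> norm (c n - z)" using abs_inner_unit[OF nu] by simp
      then show "norm (inner (c n) \<nu>) \<le> 4 * eps n" using cz[rule_format, of n]
        unfolding c_def real_norm_def by linarith
    qed
    show "(\<lambda>n. 4 * eps n) \<longlonglongrightarrow> 0" using tendsto_mult_right_zero[OF el, of 4] by simp
  qed
  have slab: "(\<lambda>n. LINT x:?Q|lborel. \<bar>chinu \<nu> (aff (c n) s x) - chinu \<nu> x\<bar>) \<longlonglongrightarrow> 0"
    by (rule chinu_translate_L1_tendsto_0[OF nu0 s Qb cl])
  have up: "(\<lambda>n. L1dist ?Q (chi (eps n) (u n)) (chinu \<nu>) / s\<^sup>2 + (LINT x:?Q|lborel. \<bar>chinu \<nu> (aff (c n) s x) - chinu \<nu> x\<bar>)) \<longlonglongrightarrow> 0"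
    using tendsto_add[OF tendsto_divide[OF L1 tendsto_const] slab, of "s\<^sup>2"] s by simp
  show ?thesis unfolding c_def[symmetric] eqc
  proof (rule tendsto_sandwich[OF _ _ tendsto_const up])
    show "eventually (\<lambda>n. 0 \<le> L1dist ?Q (\<lambda>x. chi (eps n) (u n) (aff (c n) s x)) (chinu \<nu>)) sequentially"
      by (simp add: L1dist_nonneg)
    show "eventually (\<lambda>n. L1dist ?Q (\<lambda>x. chi (eps n) (u n) (aff (c n) s x)) (chinu \<nu>) \<le>
        L1dist ?Q (chi (eps n) (u n)) (chinu \<nu>) / s\<^sup>2 + (LINT x:?Q|lborel. \<bar>chinu \<nu> (aff (c n) s x) - chinu \<nu> x\<bar>)) sequentially"
      using sub unfolding c_def[symmetric]
    proof eventually_elim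
      case (elim n)
      have oC: "open (aff (c n) s ` ?Q)" by (rule open_aff[OF s oQ])
      have "L1dist (aff (c n) s ` ?Q) (chi (eps n) (u n)) (chinu \<nu>) \<le> L1dist ?Q (chi (eps n) (u n)) (chinu \<nu>)"
        using L1dist_mono[OF ep[rule_format, of n] uS[rule_format, of n] Qb, of "aff (c n) s ` ?Q"] elim borel_open[OF oC] by simp
      then have "L1dist (aff (c n) s ` ?Q) (chi (eps n) (u n)) (chinu \<nu>) / s\<^sup>2 \<le> L1dist ?Q (chi (eps n) (u n)) (chinu \<nu>) / s\<^sup>2"
        using s by (simp add: divide_right_mono)
      then show ?case using L1dist_copy_le[OF nu s ep[rule_format, of n] uS[rule_format, of n], of "c n"] by linarith
    qed
  qed
qed

lemma Fen_outside_band_le: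
  assumes e: "\<epsilon> > 0" and nu: "\<nu> \<in> sphere (0::pt) 1" and N\<delta>: "1 / N \<le> \<delta>"
    and C: "\<And>k. k < N \<Longrightarrow> C k \<subseteq> band_cell \<nu> N k"
  shows "Fen \<epsilon> u (Sq \<nu> 1 - closure (Rect \<nu> 1 \<delta>)) + (\<Sum>k<N. Fen \<epsilon> u (C k)) \<le> Fen \<epsilon> u (Sq \<nu> 1)"
proof -
  define A where "A k = (if k < N then C k else Sq \<nu> 1 - closure (Rect \<nu> 1 \<delta>))" for k
  have CR: "C k \<subseteq> Sq \<nu> 1 \<inter> Rect \<nu> 1 \<delta>" if "k < N" for k
    using C[OF that] band_cell_subset[OF that N\<delta>] by blast
  have sub: "A k \<subseteq> Sq \<nu> 1" if "k \<in> {..<Suc N}" for k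
    using CR by (auto simp: A_def)
  have disj: "A k \<inter> A l = {}" if "k \<in> {..<Suc N}" "l \<in> {..<Suc N}" "k \<noteq> l" for k l
  proof (cases "k < N \<and> l < N")
    case True
    then show ?thesis using C[of k] C[of l] band_cells_disjoint[OF that(3), of \<nu> N] by (auto simp: A_def)
  next
    case False
    have outside: "C j \<inter> (Sq \<nu> 1 - closure (Rect \<nu> 1 \<delta>)) = {}" if "j < N" for j
      using CR[OF that] closure_subset[of "Rect \<nu> 1 \<delta>"] by blast
    from False that consider "k = N" "l < N" | "l = N" "k < N" by (auto simp: less_Suc_eq)
    then show ?thesis
    proof cases
      case 1 then show ?thesis using outside[of l] by (auto simp: A_def)
    next
      case 2 then show ?thesis using outside[of k] by (auto simp: A_def)
    qed
  qed
  have "(\<Sum>k<Suc N. Fen \<epsilon> u (A k)) \<le> Fen \<epsilon> u (Sq \<nu> 1)"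
    by (rule sum_Fen_disjoint_le) (use e finite_TriIn[OF e Sq_subset_cball[OF nu]] sub disj in auto)
  then show ?thesis unfolding A_def by simp
qed

lemma copy_energy_eventually_gt:
  assumes nu: "\<nu> \<in> sphere (0::pt) 1" and ep: "\<forall>n. eps n > 0" and el: "eps \<longlonglongrightarrow> 0"
    and uS: "\<forall>n. u n \<in> SF (eps n)"
    and L1: "(\<lambda>n. L1dist (Sq \<nu> 1) (chi (eps n) (u n)) (chinu \<nu>)) \<longlonglongrightarrow> 0"
    and psi: "psi 1 1 \<nu> = ereal P" and lt: "P' < P" and s: "s > 0"
    and W: "\<forall>n. W n \<in> Lat1" and cz: "\<forall>n. norm (eps n *\<^sub>R W n - z) \<le> 4 * eps n"
    and zn: "inner z \<nu> = 0"
    and sub: "eventually (\<lambda>n. aff (eps n *\<^sub>R W n) s ` Sq \<nu> 1 \<subseteq> Sq \<nu> 1) sequentially"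
  shows "eventually (\<lambda>n. s * P' < Fen (eps n) (u n) (aff (eps n *\<^sub>R W n) s ` Sq \<nu> 1)) sequentially"
proof -
  let ?v = "\<lambda>n x. u n (aff (eps n *\<^sub>R W n) s x)"
  have ep': "\<forall>n. eps n / s > 0" using ep s by simp
  have el': "(\<lambda>n. eps n / s) \<longlonglongrightarrow> 0" using tendsto_divide[OF el tendsto_const, of s] s by simp
  have vS: "\<forall>n. ?v n \<in> SF (eps n / s)" using SF_shift[OF s] W uS by blast
  have vL1: "(\<lambda>n. L1dist (Rect \<nu> 1 1) (chi (eps n / s) (?v n)) (chinu \<nu>)) \<longlonglongrightarrow> 0"
    using copy_L1dist_tendsto_0[OF nu ep el uS L1 s W cz zn sub] by (simp add: Sq_def)
  have "ereal P' < psi 1 1 \<nu>" using psi lt by simp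
  also have "psi 1 1 \<nu> \<le> liminf (\<lambda>n. ereal (Fen (eps n / s) (?v n) (Rect \<nu> 1 1)))"
    by (rule psi_le_liminf[OF ep' el' vS vL1])
  also have "\<dots> = liminf (\<lambda>n. ereal (Fen (eps n) (u n) (aff (eps n *\<^sub>R W n) s ` Sq \<nu> 1) / s))"
    using Fen_shift[OF s] W by (simp add: Sq_def)
  finally have "eventually (\<lambda>n. ereal P' < ereal (Fen (eps n) (u n) (aff (eps n *\<^sub>R W n) s ` Sq \<nu> 1) / s))
      sequentially"
    by (rule less_LiminfD)
  then show ?thesis by eventually_elim (use s in \<open>simp add: field_simps\<close>)
qed

lemma lattice_copies_in_band_cells:
  assumes nu: "\<nu> \<in> sphere (0::pt) 1" and ep: "\<forall>n. eps n > 0" and el: "eps \<longlonglongrightarrow> 0"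
    and N: "N > 0" and \<theta>: "0 < \<theta>" "\<theta> < 1"
  obtains W where "\<And>n k. W n k \<in> Lat1"
    and "\<And>n k. norm (eps n *\<^sub>R W n k - (-1/2 + (real k + 1/2) / N) *\<^sub>R perp \<nu>) \<le> 4 * eps n"
    and "eventually (\<lambda>n. \<forall>k<N. aff (eps n *\<^sub>R W n k) ((1 - \<theta>) / N) ` Sq \<nu> 1 \<subseteq> band_cell \<nu> N k)
      sequentially"
proof -
  have "\<forall>n k. \<exists>w\<in>Lat1. norm (eps n *\<^sub>R w - (-1/2 + (real k + 1/2) / N) *\<^sub>R perp \<nu>) \<le> 4 * eps n"
    using Lat1_approx ep by blast
  then obtain W where W: "\<And>n k. W n k \<in> Lat1"
    "\<And>n k. norm (eps n *\<^sub>R W n k - (-1/2 + (real k + 1/2) / N) *\<^sub>R perp \<nu>) \<le> 4 * eps n"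
    by metis
  have Npos: "real N > 0" using N by simp
  have s: "(1 - \<theta>) / N > 0" using \<theta> Npos by simp
  have "eventually (\<lambda>n. eps n < \<theta> / (8 * N)) sequentially"
    using order_tendstoD(2)[OF el, of "\<theta> / (8 * N)"] \<theta> Npos by simp
  then have "eventually (\<lambda>n. \<forall>k<N. aff (eps n *\<^sub>R W n k) ((1 - \<theta>) / N) ` Sq \<nu> 1 \<subseteq> band_cell \<nu> N k)
      sequentially"
  proof eventually_elim
    case (elim n)
    have "4 * eps n < \<theta> / (2 * real N)" using elim Npos by (simp add: field_simps)
    moreover have "(1 - \<theta>) / N / 2 + \<theta> / (2 * real N) = 1 / (2 * real N)" using Npos by (simp add: field_simps)
    ultimately have "(1 - \<theta>) / N / 2 + 4 * eps n < 1 / (2 * real N)" by linarith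
    then show ?case using copy_subset_band_cell[OF nu _ s W(2)] by blast
  qed
  with W show thesis by (rule that)
qed

lemma energy_outside_band_eventually_lt:
  fixes N :: nat
  assumes nu: "\<nu> \<in> sphere (0::pt) 1" and ep: "\<forall>n. eps n > 0" and el: "eps \<longlonglongrightarrow> 0"
    and uS: "\<forall>n. u n \<in> SF (eps n)"
    and L1: "(\<lambda>n. L1dist (Sq \<nu> 1) (chi (eps n) (u n)) (chinu \<nu>)) \<longlonglongrightarrow> 0"
    and psiP: "psi 1 1 \<nu> = ereal P" and FQ: "(\<lambda>n. Fen (eps n) (u n) (Sq \<nu> 1)) \<longlonglongrightarrow> P"
    and N: "N > 0" "1 / N \<le> \<delta>" and \<theta>: "0 < \<theta>" "\<theta> < 1" and \<gamma>: "\<gamma> > 0"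
  shows "eventually (\<lambda>n. Fen (eps n) (u n) (Sq \<nu> 1 - closure (Rect \<nu> 1 \<delta>))
    < P + \<gamma> - (1 - \<theta>) * (P - \<gamma>)) sequentially"
proof -
  let ?F = "\<lambda>n A. Fen (eps n) (u n) A"
  define s where "s = (1 - \<theta>) / N"
  have s: "s > 0" unfolding s_def using \<theta> N by simp
  obtain W where W: "\<And>n k. W n k \<in> Lat1"
    "\<And>n k. norm (eps n *\<^sub>R W n k - (-1/2 + (real k + 1/2) / N) *\<^sub>R perp \<nu>) \<le> 4 * eps n"
    and cells: "eventually (\<lambda>n. \<forall>k<N. aff (eps n *\<^sub>R W n k) s ` Sq \<nu> 1 \<subseteq> band_cell \<nu> N k) sequentially"
    using lattice_copies_in_band_cells[OF nu ep el N(1) \<theta>, folded s_def] by blast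
  define C where "C n k = aff (eps n *\<^sub>R W n k) s ` Sq \<nu> 1" for n k
  have copies: "eventually (\<lambda>n. \<forall>k\<in>{..<N}. s * (P - \<gamma>) < ?F n (C n k)) sequentially"
  proof (rule eventually_ball_finite, simp, intro ballI)
    fix k assume k: "k \<in> {..<N}"
    then have cell: "band_cell \<nu> N k \<subseteq> Sq \<nu> 1" using band_cell_subset[OF _ N(2)] by blast
    have "eventually (\<lambda>n. C n k \<subseteq> Sq \<nu> 1) sequentially"
      using cells unfolding C_def by eventually_elim (use k cell in auto)
    then show "eventually (\<lambda>n. s * (P - \<gamma>) < ?F n (C n k)) sequentially"
      unfolding C_def using \<gamma> W
      by (intro copy_energy_eventually_gt[OF nu ep el uS L1 psiP _ s]) (auto simp: inner_perp_self)
  qed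
  have "eventually (\<lambda>n. ?F n (Sq \<nu> 1) < P + \<gamma>) sequentially"
    using order_tendstoD(2)[OF FQ, of "P + \<gamma>"] \<gamma> by simp
  with cells copies show ?thesis
  proof eventually_elim
    case (elim n)
    have "?F n (Sq \<nu> 1 - closure (Rect \<nu> 1 \<delta>)) + (\<Sum>k<N. ?F n (C n k)) \<le> ?F n (Sq \<nu> 1)"
      by (rule Fen_outside_band_le[OF ep[rule_format] nu N(2)]) (use elim(1) in \<open>auto simp: C_def\<close>)
    moreover have "(1 - \<theta>) * (P - \<gamma>) = (\<Sum>k<N. s * (P - \<gamma>))" unfolding s_def using N by simp
    moreover have "\<dots> \<le> (\<Sum>k<N. ?F n (C n k))" using elim(2) by (intro sum_mono) (simp add: less_imp_le)
    ultimately show ?case using elim(3) by linarith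
  qed
qed

lemma energy_outside_band_tendsto_0:
  assumes nu: "\<nu> \<in> sphere (0::pt) 1" and ep: "\<forall>n. eps n > 0" and el: "eps \<longlonglongrightarrow> 0"
    and uS: "\<forall>n. u n \<in> SF (eps n)"
    and L1: "(\<lambda>n. L1dist (Sq \<nu> 1) (chi (eps n) (u n)) (chinu \<nu>)) \<longlonglongrightarrow> 0"
    and FQ: "(\<lambda>n. ereal (Fen (eps n) (u n) (Sq \<nu> 1))) \<longlonglongrightarrow> psi 1 1 \<nu>"
    and d: "\<delta> > 0"
  shows "(\<lambda>n. Fen (eps n) (u n) (Sq \<nu> 1 - closure (Rect \<nu> 1 \<delta>))) \<longlonglongrightarrow> 0"
proof -
  let ?D = "Sq \<nu> 1 - closure (Rect \<nu> 1 \<delta>)"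
  have e0: "eps n \<ge> 0" for n using ep by (simp add: less_imp_le)
  have "0 \<le> psi 1 1 \<nu>" by (rule LIMSEQ_le_const[OF FQ]) (use Fen_nonneg[OF e0] in auto)
  with psi_le_630[OF nu] obtain P where psiP: "psi 1 1 \<nu> = ereal P" and P0: "P \<ge> 0"
    by (cases "psi 1 1 \<nu>") auto
  have FQr: "(\<lambda>n. Fen (eps n) (u n) (Sq \<nu> 1)) \<longlonglongrightarrow> P" using FQ unfolding psiP by simp
  show ?thesis
  proof (rule order_tendstoI)
    fix a :: real assume "a < 0"
    then show "eventually (\<lambda>n. a < Fen (eps n) (u n) ?D) sequentially"
      by (intro always_eventually allI) (meson Fen_nonneg[OF e0] less_le_trans)
  next
    fix \<eta> :: real assume \<eta>: "0 < \<eta>"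
    define N where "N = nat \<lceil>1 / \<delta>\<rceil> + 1"
    define \<theta> where "\<theta> = min (1/2) (\<eta> / (2 * (P + 1)))"
    define \<gamma> where "\<gamma> = \<eta> / 8"
    have N1: "real N \<ge> 1" by (simp add: N_def)
    have "real N \<ge> 1 / \<delta>" unfolding N_def by linarith
    then have "1 / real N \<le> \<delta>" using d N1 by (simp add: field_simps)
    with N1 have N: "N > 0" "1 / real N \<le> \<delta>" by simp_all
    have \<theta>: "0 < \<theta>" "\<theta> < 1" unfolding \<theta>_def using \<eta> P0 by auto
    have "\<theta> * P \<le> \<eta> / (2 * (P + 1)) * P" unfolding \<theta>_def using P0 by (intro mult_right_mono) auto
    also have "\<dots> \<le> \<eta> / 2" using P0 \<eta> by (simp add: field_simps)
    finally have "\<theta> * P \<le> \<eta> / 2" .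
    moreover have "\<gamma> * (2 - \<theta>) \<le> \<gamma> * 2" using \<theta> \<eta> by (intro mult_left_mono) (auto simp: \<gamma>_def)
    moreover have "P + \<gamma> - (1 - \<theta>) * (P - \<gamma>) = \<theta> * P + \<gamma> * (2 - \<theta>)" by (simp add: algebra_simps)
    ultimately have "P + \<gamma> - (1 - \<theta>) * (P - \<gamma>) < \<eta>" unfolding \<gamma>_def using \<eta> by linarith
    moreover have "eventually (\<lambda>n. Fen (eps n) (u n) ?D < P + \<gamma> - (1 - \<theta>) * (P - \<gamma>)) sequentially"
      by (rule energy_outside_band_eventually_lt[OF nu ep el uS L1 psiP FQr N \<theta>]) (use \<eta> in \<open>simp add: \<gamma>_def\<close>)
    ultimately show "eventually (\<lambda>n. Fen (eps n) (u n) ?D < \<eta>) sequentially"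
      by (auto elim: eventually_mono)
  qed
qed

section \<open>Averaging over strips\<close>

lemma Sq_mono: "a \<le> b \<Longrightarrow> Sq \<nu> a \<subseteq> Sq \<nu> b"
  unfolding Sq_def Rect_def by auto

lemma open_strip: "open (strip \<nu> \<delta> \<epsilon> r)"
  unfolding strip_def Sq_def by (intro open_Diff open_Rect closed_Un closed_closure)

lemma strip_subset_outside_band: "r + 12 * \<epsilon> \<le> 1 \<Longrightarrow> strip \<nu> \<delta> \<epsilon> r \<subseteq> Sq \<nu> 1 - closure (Rect \<nu> 1 \<delta>)"
  unfolding strip_def using Sq_mono by blast

lemma strips_disjoint: "r + 12 * \<epsilon> \<le> r' \<Longrightarrow> strip \<nu> \<delta> \<epsilon> r \<inter> strip \<nu> \<delta> \<epsilon> r' = {}"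
  unfolding strip_def using Sq_mono closure_subset by blast

lemma sum_strips_le:
  fixes I :: "nat set" and \<epsilon> r0 :: real
  assumes nu: "\<nu> \<in> sphere (0::pt) 1" and e: "\<epsilon> > 0" and u: "u \<in> SF \<epsilon>" and I: "finite I"
    and top: "\<And>k. k \<in> I \<Longrightarrow> r0 + 12 * \<epsilon> * real k + 12 * \<epsilon> \<le> 1"
  shows "(\<Sum>k\<in>I. Fen \<epsilon> u (strip \<nu> \<delta> \<epsilon> (r0 + 12 * \<epsilon> * k))
            + L1dist (strip \<nu> \<delta> \<epsilon> (r0 + 12 * \<epsilon> * k)) (chi \<epsilon> u) (chinu \<nu>))
    \<le> Fen \<epsilon> u (Sq \<nu> 1 - closure (Rect \<nu> 1 \<delta>)) + L1dist (Sq \<nu> 1) (chi \<epsilon> u) (chinu \<nu>)"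
proof -
  define S where "S k = strip \<nu> \<delta> \<epsilon> (r0 + 12 * \<epsilon> * k)" for k :: nat
  have sub: "S k \<subseteq> Sq \<nu> 1 - closure (Rect \<nu> 1 \<delta>)" if "k \<in> I" for k
    unfolding S_def using top[OF that] by (intro strip_subset_outside_band) simp
  have disj: "S k \<inter> S l = {}" if "k \<noteq> l" for k l
    using that
  proof (induction k l rule: linorder_wlog)
    case (le k l)
    then have "12 * \<epsilon> * (real k + 1) \<le> 12 * \<epsilon> * real l" using e by (intro mult_left_mono) auto
    then show ?case unfolding S_def by (intro strips_disjoint) (simp add: algebra_simps)
  qed (auto simp: Int_commute)
  have Qb: "Sq \<nu> 1 \<in> sets borel" "bounded (Sq \<nu> 1)"
    using open_Rect bounded_Rect[OF nu] unfolding Sq_def by auto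
  have "(\<Sum>k\<in>I. Fen \<epsilon> u (S k)) \<le> Fen \<epsilon> u (Sq \<nu> 1 - closure (Rect \<nu> 1 \<delta>))"
  proof (rule sum_Fen_disjoint_le[OF _ _ I sub disj])
    show "finite (TriIn \<epsilon> (Sq \<nu> 1 - closure (Rect \<nu> 1 \<delta>)))"
      using Sq_subset_cball[OF nu] by (intro finite_TriIn[OF e, of _ 1]) blast
  qed (use e in auto)
  moreover have "(\<Sum>k\<in>I. L1dist (S k) (chi \<epsilon> u) (chinu \<nu>)) \<le> L1dist (Sq \<nu> 1) (chi \<epsilon> u) (chinu \<nu>)"
  proof (rule sum_L1dist_disjoint_le[OF e u Qb I _ _ disj])
    show "S k \<in> sets borel" for k unfolding S_def by (intro borel_open open_strip)
    show "S k \<subseteq> Sq \<nu> 1" if "k \<in> I" for k using sub[OF that] by blast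
  qed
  ultimately show ?thesis unfolding S_def by (simp add: sum.distrib)
qed

lemma exists_le_average:
  fixes f :: "nat \<Rightarrow> real" assumes I: "finite I" "I \<noteq> {}" and S: "sum f I \<le> B"
  shows "\<exists>k\<in>I. f k \<le> B / card I"
proof (rule ccontr)
  assume "\<not> (\<exists>k\<in>I. f k \<le> B / card I)"
  then have "sum (\<lambda>_. B / card I) I < sum f I" by (intro sum_strict_mono[OF I]) auto
  moreover have "sum (\<lambda>_. B / card I) I = B" using I by simp
  ultimately show False using S by simp
qed

lemma exists_good_strip:
  assumes nu: "\<nu> \<in> sphere (0::pt) 1" and e: "\<epsilon> > 0" and u: "u \<in> SF \<epsilon>" and d: "\<delta> > 0"
    and small: "\<epsilon> \<le> \<delta> / 24"
  shows "\<exists>r\<in>{1 - 3 * \<delta> <..< 1 - 2 * \<delta>}.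
    Fen \<epsilon> u (strip \<nu> \<delta> \<epsilon> r) + L1dist (strip \<nu> \<delta> \<epsilon> r) (chi \<epsilon> u) (chinu \<nu>)
      \<le> \<epsilon> * (24 / \<delta>) * (Fen \<epsilon> u (Sq \<nu> 1 - closure (Rect \<nu> 1 \<delta>)) + L1dist (Sq \<nu> 1) (chi \<epsilon> u) (chinu \<nu>))"
proof -
  define B where "B = Fen \<epsilon> u (Sq \<nu> 1 - closure (Rect \<nu> 1 \<delta>)) + L1dist (Sq \<nu> 1) (chi \<epsilon> u) (chinu \<nu>)"
  define r where "r k = 1 - 3 * \<delta> + 12 * \<epsilon> * k" for k :: nat
  define x where "x = \<delta> / (12 * \<epsilon>)"
  define K where "K = nat (\<lceil>x\<rceil> - 1)"
  have x2: "x \<ge> 2" unfolding x_def using small e by (simp add: field_simps)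
  then have Kx: "x - 1 \<le> real K" "real K < x" unfolding K_def by linarith+
  then have K1: "K \<ge> 1" using x2 by linarith
  have "\<delta> / 24 = x / 2 * \<epsilon>" unfolding x_def using e by (simp add: field_simps)
  also have "\<dots> \<le> real K * \<epsilon>" using Kx x2 e by (intro mult_right_mono) auto
  finally have K\<epsilon>: "\<delta> / 24 \<le> real K * \<epsilon>" .
  have K\<delta>: "12 * \<epsilon> * real K < \<delta>" using Kx(2) e unfolding x_def by (simp add: field_simps)
  have r: "r k \<in> {1 - 3 * \<delta> <..< 1 - 2 * \<delta>}" if "k \<in> {1..K}" for k
  proof -
    have "0 < 12 * \<epsilon> * real k" "12 * \<epsilon> * real k \<le> 12 * \<epsilon> * real K" using that e by auto
    then show ?thesis unfolding r_def using K\<delta> by simp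
  qed
  have "1 - 3 * \<delta> + 12 * \<epsilon> * real k + 12 * \<epsilon> \<le> 1" if "k \<in> {1..K}" for k
    using r[OF that] small unfolding r_def by simp
  then have "(\<Sum>k\<in>{1..K}. Fen \<epsilon> u (strip \<nu> \<delta> \<epsilon> (r k))
      + L1dist (strip \<nu> \<delta> \<epsilon> (r k)) (chi \<epsilon> u) (chinu \<nu>)) \<le> B"
    unfolding r_def B_def by (intro sum_strips_le[OF nu e u]) auto
  then obtain k where k: "k \<in> {1..K}"
    and le: "Fen \<epsilon> u (strip \<nu> \<delta> \<epsilon> (r k)) + L1dist (strip \<nu> \<delta> \<epsilon> (r k)) (chi \<epsilon> u) (chinu \<nu>) \<le> B / K"
    using exists_le_average[of "{1..K}"] K1 by fastforce
  have "B \<ge> 0" unfolding B_def using e Fen_nonneg L1dist_nonneg by (simp add: add_nonneg_nonneg)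
  moreover have "1 / real K \<le> \<epsilon> * (24 / \<delta>)" using K\<epsilon> K1 d by (simp add: field_simps)
  ultimately have "B / K \<le> \<epsilon> * (24 / \<delta>) * B"
    using mult_left_mono[of "1 / real K" "\<epsilon> * (24 / \<delta>)" B] by (simp add: mult.commute)
  then show ?thesis using r[OF k] le unfolding B_def by force
qed

lemma good_strips_of_vanishing_excess:
  assumes nu: "\<nu> \<in> sphere (0::pt) 1" and ep: "\<forall>n. eps n > 0" and el: "eps \<longlonglongrightarrow> 0"
    and uS: "\<forall>n. u n \<in> SF (eps n)" and d: "\<delta> > 0"
    and B: "(\<lambda>n. Fen (eps n) (u n) (Sq \<nu> 1 - closure (Rect \<nu> 1 \<delta>))
              + L1dist (Sq \<nu> 1) (chi (eps n) (u n)) (chinu \<nu>)) \<longlonglongrightarrow> 0"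
  shows "\<exists>\<sigma> :: nat \<Rightarrow> real. \<sigma> \<longlonglongrightarrow> 0 \<and> (\<exists>r :: nat \<Rightarrow> real. \<forall>n.
           r n \<in> {1 - 3 * \<delta> <..< 1 - 2 * \<delta>} \<and>
           Fen (eps n) (u n) (strip \<nu> \<delta> (eps n) (r n))
             + L1dist (strip \<nu> \<delta> (eps n) (r n)) (chi (eps n) (u n)) (chinu \<nu>)
             \<le> eps n * \<sigma> n)"
proof -
  define B where "B n = Fen (eps n) (u n) (Sq \<nu> 1 - closure (Rect \<nu> 1 \<delta>))
    + L1dist (Sq \<nu> 1) (chi (eps n) (u n)) (chinu \<nu>)" for n
  define val where "val n r = Fen (eps n) (u n) (strip \<nu> \<delta> (eps n) r)
    + L1dist (strip \<nu> \<delta> (eps n) r) (chi (eps n) (u n)) (chinu \<nu>)" for n r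
  have "\<exists>r\<in>{1 - 3 * \<delta> <..< 1 - 2 * \<delta>}. eps n \<le> \<delta> / 24 \<longrightarrow> val n r \<le> eps n * (24 / \<delta> * B n)" for n
  proof (cases "eps n \<le> \<delta> / 24")
    case True
    then show ?thesis using exists_good_strip[OF nu ep[rule_format] uS[rule_format] d True]
      by (auto simp: val_def B_def mult.assoc)
  next
    case False
    have "1 - 5 * \<delta> / 2 \<in> {1 - 3 * \<delta> <..< 1 - 2 * \<delta>}" using d by simp
    with False show ?thesis by blast
  qed
  then obtain r where r: "\<And>n. r n \<in> {1 - 3 * \<delta> <..< 1 - 2 * \<delta>}"
    and good: "\<And>n. eps n \<le> \<delta> / 24 \<Longrightarrow> val n (r n) \<le> eps n * (24 / \<delta> * B n)"
    by metis
  define \<sigma> where "\<sigma> n = val n (r n) / eps n" for n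
  have "\<sigma> \<longlonglongrightarrow> 0"
  proof (rule tendsto_sandwich[OF _ _ tendsto_const tendsto_mult_right_zero[OF B[folded B_def]]])
    show "eventually (\<lambda>n. 0 \<le> \<sigma> n) sequentially"
      using ep Fen_nonneg L1dist_nonneg by (simp add: \<sigma>_def val_def less_imp_le)
    have "eventually (\<lambda>n. eps n < \<delta> / 24) sequentially"
      using order_tendstoD(2)[OF el, of "\<delta> / 24"] d by simp
    then show "eventually (\<lambda>n. \<sigma> n \<le> 24 / \<delta> * B n) sequentially"
      by eventually_elim (use good ep in \<open>simp add: \<sigma>_def pos_divide_le_eq mult.commute\<close>)
  qed
  moreover have "val n (r n) \<le> eps n * \<sigma> n" for n using ep[rule_format, of n] by (simp add: \<sigma>_def)
  ultimately show ?thesis using r unfolding val_def by blast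
qed

theorem lemma4p4:
  fixes \<nu> :: pt and eps :: "nat \<Rightarrow> real" and u :: "nat \<Rightarrow> pt \<Rightarrow> pt"
  assumes "\<nu> \<in> sphere 0 1"
    and "\<forall>n. eps n > 0" and "eps \<longlonglongrightarrow> 0"
    and "\<forall>n. u n \<in> SF (eps n)"
    and "(\<lambda>n. L1dist (Sq \<nu> 1) (chi (eps n) (u n)) (chinu \<nu>)) \<longlonglongrightarrow> 0"
    and "(\<lambda>n. ereal (Fen (eps n) (u n) (Sq \<nu> 1))) \<longlonglongrightarrow> psi 1 1 \<nu>"
  shows "\<forall>\<delta>>0. \<exists>\<sigma> :: nat \<Rightarrow> real. \<sigma> \<longlonglongrightarrow> 0 \<and> (\<exists>r :: nat \<Rightarrow> real. \<forall>n.
           r n \<in> {1 - 3 * \<delta> <..< 1 - 2 * \<delta>} \<and>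
           Fen (eps n) (u n) (strip \<nu> \<delta> (eps n) (r n))
             + L1dist (strip \<nu> \<delta> (eps n) (r n)) (chi (eps n) (u n)) (chinu \<nu>)
             \<le> eps n * \<sigma> n)"
proof (intro allI impI)
  fix \<delta> :: real assume d: "\<delta> > 0"
  have "(\<lambda>n. Fen (eps n) (u n) (Sq \<nu> 1 - closure (Rect \<nu> 1 \<delta>))
      + L1dist (Sq \<nu> 1) (chi (eps n) (u n)) (chinu \<nu>)) \<longlonglongrightarrow> 0"
    using tendsto_add[OF energy_outside_band_tendsto_0[OF assms d] assms(5)] by simp
  from good_strips_of_vanishing_excess[OF assms(1-4) d this]
  show "\<exists>\<sigma> :: nat \<Rightarrow> real. \<sigma> \<longlonglongrightarrow> 0 \<and> (\<exists>r :: nat \<Rightarrow> real. \<forall>n.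
           r n \<in> {1 - 3 * \<delta> <..< 1 - 2 * \<delta>} \<and>
           Fen (eps n) (u n) (strip \<nu> \<delta> (eps n) (r n))
             + L1dist (strip \<nu> \<delta> (eps n) (r n)) (chi (eps n) (u n)) (chinu \<nu>)
             \<le> eps n * \<sigma> n)" .
qed

end
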